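(* Let $X$ be compact Hausdorff, $\mu$ a probability Radon measure on $X$, $(H,e)$ a unital Hilbert space with hermitian basis $F\ni e$, and let $k=\{k_f:f\in F\}$ be a unital $H$-support in $(L^2(X,\mu),1)$ consisting of real-valued functions with $k_e\ge0$ a.e. and $\sum_{f\neq e}k_f^2\le k_e^2$ a.e. Let $T_k:L^2(X,\mu)\to H$, $T_k\eta=\sum_f(\eta,k_f)f$, and $T=T_k\circ\iota:C(X)\to H$ with $\iota$ the canonical map. Then $T^{(n)}(M_n(C(X))_+)\subseteq\max\mathfrak c_e$ for all $n$ (so $T$ is a matrix positive map from $C(X)$ to $(H,\max\mathfrak c_e)$), $T$ is unital positive and a nuclear operator, and its $H$-support on $X$ is taken with respect to $\mu'=k_e\mu$ and given by $k'_e=1$, $k'_f=k_f/k_e$ for $f\neq e$.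
   Context: A Hilbert $*$-space is a complex Hilbert space (inner product linear in the first variable) with a conjugate-linear $\zeta\mapsto\zeta^*$, $\zeta^{**}=\zeta$, $(\zeta^*,\eta^* )=\overline{(\zeta,\eta)}$. A unital Hilbert space $(K,u)$ has a fixed hermitian unit vector $u$ and cone $\mathfrak c_u=\{\eta\in K_h:\|\eta\|\le\sqrt2(\eta,u)\}$; $L^2(X,\mu)$ is a unital Hilbert space with involution complex conjugation and unit $1$. An $H$-support in $(K,u)$ is a bounded family $\{k_f\}\subseteq K_h$ with $k_e\in\mathfrak c_u$ and $\sum_{f\ne e}(\eta,k_f)^2\le(\eta,k_e)^2$ for $\eta\in\mathfrak c_u$; unital if $(k_e,u)=1$, $(k_f,u)=0$ for $f\ne e$. An $H$-support on $X$ w.r.t. a probability measure $\nu$: real Borel functions $\{k_f\}$ with $|k_f|\le1$ $\nu$-a.e., $k_e=1$, $\int k_fd\nu=0$ ($f\ne e$), $\sum_{f\ne e}(\int vk_fd\nu)^2\le(\int vd\nu)^2$ for $v\in C(X)_+$; a unital positive map $S:C(X)\to H$ ($S1=e$, $S(C(X)_+)\subseteq\mathfrak c_e$) is written $Sv=\sum_f(\int vk_fd\nu)f$. $M_n(C(X))_+$: matrices of continuous functions positive semidefinite at each point; $T^{(n)}[v_{ij}]=[Tv_{ij}]$. $\max\mathfrak c_e$: with $\overline H$ the conjugate space and $\mathfrak c_e^\boxdot=\{\bar\eta\in M_n(\overline H)_h:[(\xi,\eta_{st})]\ge0\ \forall\xi\in\mathfrak c_e\}$, $\max\mathfrak c_e\cap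 M_n(H)=\{\zeta\in M_n(H)_h:[(\zeta_{ik},\eta_{jl})]_{(i,j),(k,l)}\ge0\ \forall\bar\eta\in\mathfrak c_e^\boxdot\}$, where matrices carry the involution $[x_{ij}]^*=[x_{ji}^*]$. *)

theory Defs
  imports "HOL-Probability.Probability"
begin

section \<open>The unital Hilbert space (H,e) with hermitian orthonormal basis F, modelled as l2(F)\<close>

definition l2 :: "('f \<Rightarrow> complex) set" where
  "l2 = {x. (\<lambda>f. (cmod (x f))\<^sup>2) summable_on UNIV}"

definition l2_inner :: "('f \<Rightarrow> complex) \<Rightarrow> ('f \<Rightarrow> complex) \<Rightarrow> complex" where
  "l2_inner x y = infsum (\<lambda>f. x f * cnj (y f)) UNIV"

definition l2_norm :: "('f \<Rightarrow> complex) \<Rightarrow> real" where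
  "l2_norm x = sqrt (infsum (\<lambda>f. (cmod (x f))\<^sup>2) UNIV)"

text \<open>involution: coordinatewise conjugation w.r.t. the hermitian basis\<close>
definition l2_star :: "('f \<Rightarrow> complex) \<Rightarrow> ('f \<Rightarrow> complex)" where
  "l2_star x = (\<lambda>f. cnj (x f))"

definition basis_vec :: "'f \<Rightarrow> ('f \<Rightarrow> complex)" where
  "basis_vec u = (\<lambda>f. if f = u then 1 else 0)"

definition herm_cone :: "'f \<Rightarrow> ('f \<Rightarrow> complex) set" where
  "herm_cone u = {\<eta> \<in> l2. l2_star \<eta> = \<eta> \<and>
      l2_norm \<eta> \<le> sqrt 2 * Re (l2_inner \<eta> (basis_vec u))}"

definition psd_on :: "'i set \<Rightarrow> ('i \<Rightarrow> 'i \<Rightarrow> complex) \<Rightarrow> bool" where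
  "psd_on I A \<longleftrightarrow> (\<forall>x :: 'i \<Rightarrow> complex.
      Im (\<Sum>p\<in>I. \<Sum>q\<in>I. cnj (x p) * A p q * x q) = 0 \<and>
      Re (\<Sum>p\<in>I. \<Sum>q\<in>I. cnj (x p) * A p q * x q) \<ge> 0)"

text \<open>An m x m matrix eta (entries given as vectors of H, i.e. the elements of the conjugate
  space) that is hermitian and satisfies [(xi, eta_st)] >= 0 for all xi in c_e.\<close>
definition boxdot_cone :: "'f \<Rightarrow> nat \<Rightarrow> (nat \<Rightarrow> nat \<Rightarrow> ('f \<Rightarrow> complex)) \<Rightarrow> bool" where
  "boxdot_cone u m \<eta> \<longleftrightarrow>
     (\<forall>s<m. \<forall>t<m. \<eta> s t \<in> l2 \<and> \<eta> s t = l2_star (\<eta> t s)) \<and>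
     (\<forall>\<xi>\<in>herm_cone u. psd_on {..<m} (\<lambda>s t. l2_inner \<xi> (\<eta> s t)))"

definition max_cone :: "'f \<Rightarrow> nat \<Rightarrow> (nat \<Rightarrow> nat \<Rightarrow> ('f \<Rightarrow> complex)) \<Rightarrow> bool" where
  "max_cone u n \<zeta> \<longleftrightarrow>
     (\<forall>i<n. \<forall>k<n. \<zeta> i k \<in> l2 \<and> \<zeta> i k = l2_star (\<zeta> k i)) \<and>
     (\<forall>m \<eta>. boxdot_cone u m \<eta> \<longrightarrow>
        psd_on ({..<n} \<times> {..<m}) (\<lambda>(i,j) (k,l). l2_inner (\<zeta> i k) (\<eta> j l)))"

definition radon_prob :: "'a::topological_space measure \<Rightarrow> bool" where
  "radon_prob M \<longleftrightarrow> prob_space M \<and> sets M = sets borel \<and>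
     (\<forall>A\<in>sets borel. emeasure M A = (INF U\<in>{U. open U \<and> A \<subseteq> U}. emeasure M U)) \<and>
     (\<forall>U. open U \<longrightarrow> emeasure M U = (SUP K\<in>{K. compact K \<and> K \<subseteq> U}. emeasure M K))"

text \<open>hermitian elements of L2(X,mu), represented by real-valued square integrable functions\<close>
definition L2r :: "'a measure \<Rightarrow> ('a \<Rightarrow> real) \<Rightarrow> bool" where
  "L2r M g \<longleftrightarrow> g \<in> borel_measurable M \<and> integrable M (\<lambda>x. (g x)\<^sup>2)"

definition L2_norm :: "'a measure \<Rightarrow> ('a \<Rightarrow> real) \<Rightarrow> real" where
  "L2_norm M g = sqrt (\<integral>x. (g x)\<^sup>2 \<partial>M)"

definition L2_cone :: "'a measure \<Rightarrow> ('a \<Rightarrow> real) set" where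
  "L2_cone M = {\<eta>. L2r M \<eta> \<and> L2_norm M \<eta> \<le> sqrt 2 * (\<integral>x. \<eta> x \<partial>M)}"

definition unital_H_support_L2 :: "'a measure \<Rightarrow> 'f \<Rightarrow> ('f \<Rightarrow> 'a \<Rightarrow> real) \<Rightarrow> bool" where
  "unital_H_support_L2 M e k \<longleftrightarrow>
     (\<forall>f. L2r M (k f)) \<and> (\<exists>B. \<forall>f. L2_norm M (k f) \<le> B) \<and>
     k e \<in> L2_cone M \<and>
     (\<forall>\<eta>\<in>L2_cone M.
        (\<lambda>f. (\<integral>x. \<eta> x * k f x \<partial>M)\<^sup>2) summable_on (UNIV - {e}) \<and>
        infsum (\<lambda>f. (\<integral>x. \<eta> x * k f x \<partial>M)\<^sup>2) (UNIV - {e}) \<le> (\<integral>x. \<eta> x * k e x \<partial>M)\<^sup>2) \<and>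
     (\<integral>x. k e x \<partial>M) = 1 \<and> (\<forall>f. f \<noteq> e \<longrightarrow> (\<integral>x. k f x \<partial>M) = 0)"

definition Tk :: "'a measure \<Rightarrow> ('f \<Rightarrow> 'a \<Rightarrow> real) \<Rightarrow> ('a \<Rightarrow> complex) \<Rightarrow> ('f \<Rightarrow> complex)" where
  "Tk M k \<eta> = (\<lambda>f. \<integral>x. \<eta> x * complex_of_real (k f x) \<partial>M)"

definition H_support_on_X :: "'a::topological_space measure \<Rightarrow> 'f \<Rightarrow> ('f \<Rightarrow> 'a \<Rightarrow> real) \<Rightarrow> bool" where
  "H_support_on_X \<nu> e k \<longleftrightarrow>
     (\<forall>f. k f \<in> borel_measurable \<nu>) \<and>
     (\<forall>f. AE x in \<nu>. \<bar>k f x\<bar> \<le> 1) \<and>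
     k e = (\<lambda>_. 1) \<and>
     (\<forall>f. f \<noteq> e \<longrightarrow> (\<integral>x. k f x \<partial>\<nu>) = 0) \<and>
     (\<forall>v. continuous_on UNIV v \<and> (\<forall>x. v x \<ge> 0) \<longrightarrow>
        (\<lambda>f. (\<integral>x. v x * k f x \<partial>\<nu>)\<^sup>2) summable_on (UNIV - {e}) \<and>
        infsum (\<lambda>f. (\<integral>x. v x * k f x \<partial>\<nu>)\<^sup>2) (UNIV - {e}) \<le> (\<integral>x. v x \<partial>\<nu>)\<^sup>2)"

definition sup_norm :: "('a \<Rightarrow> complex) \<Rightarrow> real" where
  "sup_norm v = (SUP x. cmod (v x))"

definition nuclear_CX :: "(('a::topological_space \<Rightarrow> complex) \<Rightarrow> ('f \<Rightarrow> complex)) \<Rightarrow> bool" where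
  "nuclear_CX T \<longleftrightarrow>
     (\<forall>v. continuous_on UNIV v \<longrightarrow> T v \<in> l2) \<and>
     (\<exists>(\<phi> :: nat \<Rightarrow> ('a \<Rightarrow> complex) \<Rightarrow> complex) (y :: nat \<Rightarrow> ('f \<Rightarrow> complex)) (c :: nat \<Rightarrow> real).
        (\<forall>n v w a. continuous_on UNIV v \<and> continuous_on UNIV w \<longrightarrow>
            \<phi> n (\<lambda>x. a * v x + w x) = a * \<phi> n v + \<phi> n w) \<and>
        (\<forall>n v. continuous_on UNIV v \<longrightarrow> cmod (\<phi> n v) \<le> c n * sup_norm v) \<and>
        (\<forall>n. c n \<ge> 0 \<and> y n \<in> l2) \<and>
        summable (\<lambda>n. c n * l2_norm (y n)) \<and>
        (\<forall>v. continuous_on UNIV v \<longrightarrow>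
            (\<lambda>N. l2_norm (\<lambda>f. T v f - (\<Sum>n<N. \<phi> n v * y n f))) \<longlonglongrightarrow> 0))"

end

theory Submission
  imports Defs
begin

definition quad_form :: "'i set \<Rightarrow> ('i \<Rightarrow> 'i \<Rightarrow> complex) \<Rightarrow> ('i \<Rightarrow> complex) \<Rightarrow> complex" where
  "quad_form I P x = (\<Sum>a\<in>I. \<Sum>b\<in>I. cnj (x a) * P a b * x b)"

lemma psd_on_iff_quad_form:
  "psd_on I P \<longleftrightarrow> (\<forall>x. Im (quad_form I P x) = 0 \<and> Re (quad_form I P x) \<ge> 0)"
  unfolding psd_on_def quad_form_def by simp

lemma quad_form_cong:
  assumes "finite I" "T \<subseteq> I" "\<And>c. c \<in> I \<Longrightarrow> c \<notin> T \<Longrightarrow> x c = 0" "\<And>c. c \<in> T \<Longrightarrow> x c = y c"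
  shows "quad_form I P x = quad_form T P y"
proof -
  have "quad_form I P x = (\<Sum>a\<in>T. \<Sum>b\<in>I. cnj (x a) * P a b * x b)"
    unfolding quad_form_def by (rule sum.mono_neutral_right) (use assms in \<open>auto intro: finite_subset\<close>)
  also have "\<dots> = (\<Sum>a\<in>T. \<Sum>b\<in>T. cnj (x a) * P a b * x b)"
    by (rule sum.cong[OF refl], rule sum.mono_neutral_right) (use assms in \<open>auto intro: finite_subset\<close>)
  finally show ?thesis
    unfolding quad_form_def using assms(4) by simp
qed

lemma psd_on_diag:
  assumes "psd_on I P" "finite I" "a \<in> I"
  shows "Im (P a a) = 0" "Re (P a a) \<ge> 0"
proof -
  have "quad_form I P (\<lambda>c. if c = a then 1 else 0) = quad_form {a} P (\<lambda>_. 1)"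
    by (rule quad_form_cong) (use assms in auto)
  then have "quad_form I P (\<lambda>c. if c = a then 1 else 0) = P a a"
    by (simp add: quad_form_def)
  then show "Im (P a a) = 0" "Re (P a a) \<ge> 0"
    using assms(1) unfolding psd_on_iff_quad_form by metis+
qed

lemma psd_on_hermitian:
  assumes "psd_on I P" "finite I" "a \<in> I" "b \<in> I"
  shows "P b a = cnj (P a b)"
proof (cases "a = b")
  case True
  then show ?thesis using psd_on_diag(1)[OF assms(1-3)] by (simp add: complex_eq_iff)
next
  case False
  have quad: "quad_form I P (\<lambda>c. if c = a then 1 else if c = b then z else 0)
      = P a a + z * P a b + cnj z * P b a + cnj z * z * P b b" for z
  proof -
    have "quad_form I P (\<lambda>c. if c = a then 1 else if c = b then z else 0)
        = quad_form {a, b} P (\<lambda>c. if c = a then 1 else z)"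
      by (rule quad_form_cong) (use assms False in auto)
    then show ?thesis using False by (simp add: quad_form_def algebra_simps)
  qed
  have "Im (P a a + z * P a b + cnj z * P b a + cnj z * z * P b b) = 0" for z
    using assms(1) unfolding psd_on_iff_quad_form quad[symmetric] by blast
  from this[of 1] this[of \<i>] show ?thesis
    using psd_on_diag(1)[OF assms(1,2)] assms(3,4) by (simp add: complex_eq_iff)
qed

lemma psd_on_insertD:
  assumes "psd_on (insert p I) P" "finite I"
  shows "psd_on I P"
  unfolding psd_on_iff_quad_form
proof
  fix x :: "_ \<Rightarrow> complex"
  have "quad_form (insert p I) P (\<lambda>c. if c \<in> I then x c else 0) = quad_form I P x"
    by (rule quad_form_cong) (use assms(2) in auto)
  then show "Im (quad_form I P x) = 0 \<and> Re (quad_form I P x) \<ge> 0"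
    using assms(1) unfolding psd_on_iff_quad_form by metis
qed

lemma psd_on_zero_diag_imp_zero:
  assumes "psd_on I P" "finite I" "p \<in> I" "q \<in> I" "P p p = 0"
  shows "P q p = 0"
proof (rule ccontr)
  assume ne: "P q p \<noteq> 0"
  then have "q \<noteq> p" using assms(5) by auto
  define t :: real where "t = (\<bar>Re (P q q)\<bar> + 1) / (2 * (cmod (P q p))\<^sup>2)"
  have herm: "P p q = cnj (P q p)" using psd_on_hermitian[OF assms(1,2,4,3)] .
  have "quad_form I P (\<lambda>c. if c = q then 1 else if c = p then - t * cnj (P q p) else 0)
      = quad_form {q, p} P (\<lambda>c. if c = q then 1 else - t * cnj (P q p))"
    by (rule quad_form_cong) (use assms \<open>q \<noteq> p\<close> in auto)
  also have "\<dots> = P q q - 2 * t * (P q p * cnj (P q p))"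
    using \<open>q \<noteq> p\<close> assms(5) herm by (simp add: quad_form_def algebra_simps)
  also have "\<dots> = P q q - of_real (2 * t * (cmod (P q p))\<^sup>2)"
    by (simp only: of_real_mult complex_norm_square)
  also have "2 * t * (cmod (P q p))\<^sup>2 = \<bar>Re (P q q)\<bar> + 1"
    using ne by (simp add: t_def)
  finally have "Re (quad_form I P (\<lambda>c. if c = q then 1 else if c = p then - t * cnj (P q p) else 0)) < 0"
    by simp
  then show False using assms(1) unfolding psd_on_iff_quad_form by (metis not_less)
qed

lemma quad_form_insert:
  assumes "finite I" "p \<notin> I"
  shows "quad_form (insert p I) P x = cnj (x p) * P p p * x p + cnj (x p) * (\<Sum>b\<in>I. P p b * x b)
    + (\<Sum>a\<in>I. cnj (x a) * P a p) * x p + quad_form I P x"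
  using assms by (simp add: quad_form_def sum.distrib sum_distrib_left sum_distrib_right algebra_simps)

lemma psd_on_schur_complement:
  assumes psd: "psd_on (insert p I) P" and I: "finite I" "p \<notin> I" and pos: "Re (P p p) > 0"
  shows "psd_on I (\<lambda>a b. P a b - P a p * P p b / P p p)"
  unfolding psd_on_iff_quad_form
proof
  fix x :: "_ \<Rightarrow> complex"
  define d where "d = P p p"
  define s where "s = (\<Sum>b\<in>I. P p b * x b)"
  have "cnj d = d" "d \<noteq> 0"
    using psd_on_diag(1)[OF psd] I pos unfolding d_def by (auto simp: complex_eq_iff)
  have "P a p = cnj (P p a)" if "a \<in> I" for a
    by (rule psd_on_hermitian[OF psd]) (use I that in auto)
  then have row: "(\<Sum>a\<in>I. cnj (x a) * P a p) = cnj s"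
    unfolding s_def cnj_sum by (auto intro!: sum.cong)
  have "quad_form (insert p I) P (x(p := - s / d))
      = cnj (s / d) * d * (s / d) - cnj (s / d) * s - cnj s * (s / d) + quad_form I P x"
  proof -
    have "quad_form I P (x(p := - s / d)) = quad_form I P x"
      by (rule quad_form_cong) (use I in auto)
    moreover have "(\<Sum>b\<in>I. P p b * (x(p := - s / d)) b) = s"
      unfolding s_def using I by (intro sum.cong) auto
    moreover have "(\<Sum>a\<in>I. cnj ((x(p := - s / d)) a) * P a p) = cnj s"
      unfolding row[symmetric] using I by (intro sum.cong) auto
    ultimately show ?thesis
      unfolding quad_form_insert[OF I] d_def by simp
  qed
  also have "\<dots> = quad_form I P x - cnj s * s / d"
    using \<open>cnj d = d\<close> \<open>d \<noteq> 0\<close> by (simp add: field_simps)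
  also have "cnj s * s / d = (\<Sum>a\<in>I. \<Sum>b\<in>I. cnj (x a) * (P a p * P p b / d) * x b)"
    unfolding row[symmetric] unfolding s_def
    by (simp add: sum_product sum_divide_distrib ac_simps) (rule sum.swap)
  finally have "quad_form (insert p I) P (x(p := - s / d))
      = quad_form I (\<lambda>a b. P a b - P a p * P p b / P p p) x"
    unfolding quad_form_def d_def by (simp add: algebra_simps sum_subtractf)
  then show "Im (quad_form I (\<lambda>a b. P a b - P a p * P p b / P p p) x) = 0 \<and>
      Re (quad_form I (\<lambda>a b. P a b - P a p * P p b / P p p) x) \<ge> 0"
    using psd unfolding psd_on_iff_quad_form by metis
qed

lemma psd_on_gram:
  assumes "finite I" "psd_on I P"
  shows "\<exists>us. \<forall>a\<in>I. \<forall>b\<in>I. P a b = (\<Sum>u\<leftarrow>us. u a * cnj (u b))"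
  using assms
proof (induction I arbitrary: P rule: finite_induct)
  case empty
  then show ?case by simp
next
  case (insert p I)
  define d where "d = Re (P p p)"
  define P' where "P' a b = P a b - P a p * P p b / P p p" for a b
  define u where "u a = P a p / of_real (sqrt d)" for a
  have fin: "finite (insert p I)" using insert.hyps by simp
  have Ppp: "P p p = of_real d" "d \<ge> 0"
    using psd_on_diag[OF insert.prems fin] unfolding d_def by (auto simp: complex_eq_iff)
  have herm: "P p a = cnj (P a p)" if "a \<in> insert p I" for a
    by (rule psd_on_hermitian[OF insert.prems fin that]) simp
  have "psd_on I P'"
  proof (cases "d = 0")
    case True
    then have "P' = P" using Ppp by (simp add: P'_def fun_eq_iff)
    then show ?thesis using psd_on_insertD[OF insert.prems insert.hyps(1)] by simp
  next
    case False
    then show ?thesis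
      using psd_on_schur_complement[OF insert.prems insert.hyps] Ppp unfolding P'_def by simp
  qed
  then obtain us where us: "\<forall>a\<in>I. \<forall>b\<in>I. P' a b = (\<Sum>u\<leftarrow>us. u a * cnj (u b))"
    using insert.IH by blast
  have rank_one: "P a b = P' a b + u a * cnj (u b)" if "b \<in> insert p I" for a b
  proof -
    have "of_real (sqrt d) * of_real (sqrt d) = P p p" using Ppp by (simp flip: of_real_mult)
    then show ?thesis using herm[OF that] by (simp add: P'_def u_def)
  qed
  have border: "P' a b = 0" if "a \<in> insert p I" "b \<in> insert p I" "a = p \<or> b = p" for a b
  proof (cases "P p p = 0")
    case True
    have "P c p = 0" if "c \<in> insert p I" for c
      by (rule psd_on_zero_diag_imp_zero[OF insert.prems fin _ that True]) simp
    then show ?thesis using that herm by (auto simp: P'_def)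
  next
    case False
    then show ?thesis using that by (auto simp: P'_def)
  qed
  show ?case
  proof (intro exI[of _ "u # map (\<lambda>v. v(p := 0)) us"] ballI)
    fix a b assume ab: "a \<in> insert p I" "b \<in> insert p I"
    show "P a b = (\<Sum>v\<leftarrow>u # map (\<lambda>v. v(p := 0)) us. v a * cnj (v b))"
    proof (cases "a = p \<or> b = p")
      case True
      then show ?thesis using rank_one[OF ab(2)] border[OF ab True] by (auto simp: o_def)
    next
      case False
      then show ?thesis using rank_one[OF ab(2)] us ab by (auto simp: o_def)
    qed
  qed
qed

lemma quad_form_sum_list:
  "quad_form I (\<lambda>a b. \<Sum>u\<leftarrow>us. F u a b) x = (\<Sum>u\<leftarrow>us. quad_form I (F u) x)"
  by (induction us) (simp_all add: quad_form_def algebra_simps sum.distrib)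

lemma quad_form_kronecker_rank_one:
  "quad_form (I \<times> J) (\<lambda>(i, j) (k, l). u i * cnj (u k) * Q j l) z
     = quad_form J Q (\<lambda>l. \<Sum>k\<in>I. cnj (u k) * z (k, l))"
proof -
  define g where "g i j k l = cnj (z (i, j)) * (u i * cnj (u k) * Q j l) * z (k, l)" for i j k l
  have "(\<Sum>a\<in>I \<times> J. h a) = (\<Sum>i\<in>I. \<Sum>j\<in>J. h (i, j))" for h :: "_ \<Rightarrow> complex"
    by (simp add: sum.cartesian_product)
  then have "quad_form (I \<times> J) (\<lambda>(i, j) (k, l). u i * cnj (u k) * Q j l) z
      = (\<Sum>i\<in>I. \<Sum>j\<in>J. \<Sum>k\<in>I. \<Sum>l\<in>J. g i j k l)"
    unfolding quad_form_def g_def by (simp only: split_conv)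
  also have "\<dots> = (\<Sum>j\<in>J. \<Sum>i\<in>I. \<Sum>k\<in>I. \<Sum>l\<in>J. g i j k l)"
    by (rule sum.swap)
  also have "\<dots> = (\<Sum>j\<in>J. \<Sum>i\<in>I. \<Sum>l\<in>J. \<Sum>k\<in>I. g i j k l)"
    by (intro sum.cong refl sum.swap)
  also have "\<dots> = (\<Sum>j\<in>J. \<Sum>l\<in>J. \<Sum>i\<in>I. \<Sum>k\<in>I. g i j k l)"
    by (intro sum.cong refl sum.swap)
  also have "\<dots> = quad_form J Q (\<lambda>l. \<Sum>k\<in>I. cnj (u k) * z (k, l))"
    unfolding quad_form_def g_def by (simp add: sum_distrib_left sum_distrib_right ac_simps)
  finally show ?thesis .
qed

lemma psd_on_kronecker:
  fixes P :: "'i \<Rightarrow> 'i \<Rightarrow> complex" and Q :: "'j \<Rightarrow> 'j \<Rightarrow> complex"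
  assumes "finite I" "psd_on I P" "psd_on J Q"
  shows "psd_on (I \<times> J) (\<lambda>(i, j) (k, l). P i k * Q j l)"
  unfolding psd_on_iff_quad_form
proof
  fix z :: "'i \<times> 'j \<Rightarrow> complex"
  obtain us where us: "\<forall>a\<in>I. \<forall>b\<in>I. P a b = (\<Sum>u\<leftarrow>us. u a * cnj (u b))"
    using psd_on_gram[OF assms(1,2)] by blast
  define w where "w u l = (\<Sum>k\<in>I. cnj (u k) * z (k, l))" for u l
  have "quad_form (I \<times> J) (\<lambda>(i, j) (k, l). P i k * Q j l) z
      = quad_form (I \<times> J) (\<lambda>a b. \<Sum>u\<leftarrow>us. (\<lambda>(i, j) (k, l). u i * cnj (u k) * Q j l) a b) z"
    unfolding quad_form_def using us
    by (intro sum.cong refl) (auto simp: sum_list_mult_const split: prod.splits)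
  also have "\<dots> = (\<Sum>u\<leftarrow>us. quad_form J Q (w u))"
    unfolding quad_form_sum_list quad_form_kronecker_rank_one w_def ..
  finally have eq: "quad_form (I \<times> J) (\<lambda>(i, j) (k, l). P i k * Q j l) z = \<dots>" .
  have "Im (quad_form J Q (w u)) = 0 \<and> Re (quad_form J Q (w u)) \<ge> 0" for u
    using assms(3) unfolding psd_on_iff_quad_form by blast
  then have "Im (\<Sum>u\<leftarrow>us. quad_form J Q (w u)) = 0 \<and> Re (\<Sum>u\<leftarrow>us. quad_form J Q (w u)) \<ge> 0"
    by (induction us) auto
  then show "Im (quad_form (I \<times> J) (\<lambda>(i, j) (k, l). P i k * Q j l) z) = 0 \<and>
      Re (quad_form (I \<times> J) (\<lambda>(i, j) (k, l). P i k * Q j l) z) \<ge> 0"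
    unfolding eq .
qed

lemma psd_on_integral:
  fixes G :: "'a \<Rightarrow> 'i \<Rightarrow> 'i \<Rightarrow> complex"
  assumes I: "finite I"
    and integrable: "\<And>a b. a \<in> I \<Longrightarrow> b \<in> I \<Longrightarrow> integrable M (\<lambda>x. G x a b)"
    and P: "\<And>a b. a \<in> I \<Longrightarrow> b \<in> I \<Longrightarrow> P a b = (\<integral>x. G x a b \<partial>M)"
    and psd: "AE x in M. psd_on I (G x)"
  shows "psd_on I P"
  unfolding psd_on_iff_quad_form
proof
  fix z :: "'i \<Rightarrow> complex"
  have int_q: "integrable M (\<lambda>x. quad_form I (G x) z)"
    unfolding quad_form_def using integrable by simp
  have "quad_form I P z = (\<Sum>a\<in>I. \<Sum>b\<in>I. \<integral>x. cnj (z a) * G x a b * z b \<partial>M)"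
    unfolding quad_form_def by (intro sum.cong refl) (simp add: P)
  also have "\<dots> = (\<integral>x. quad_form I (G x) z \<partial>M)"
    unfolding quad_form_def using integrable by (simp add: Bochner_Integration.integral_sum)
  finally have q: "quad_form I P z = (\<integral>x. quad_form I (G x) z \<partial>M)" .
  have AE_q: "AE x in M. Im (quad_form I (G x) z) = 0 \<and> Re (quad_form I (G x) z) \<ge> 0"
    using psd by eventually_elim (simp add: psd_on_iff_quad_form)
  have "Im (quad_form I P z) = (\<integral>x. Im (quad_form I (G x) z) \<partial>M)"
    unfolding q by (rule integral_Im[symmetric, OF int_q])
  also have "\<dots> = 0" using AE_q by (intro integral_eq_zero_AE) auto
  finally have "Im (quad_form I P z) = 0" .
  moreover have "Re (quad_form I P z) = (\<integral>x. Re (quad_form I (G x) z) \<partial>M)"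
    unfolding q by (rule integral_Re[symmetric, OF int_q])
  moreover have "(\<integral>x. Re (quad_form I (G x) z) \<partial>M) \<ge> 0"
    using AE_q by (intro integral_nonneg_AE) auto
  ultimately show "Im (quad_form I P z) = 0 \<and> Re (quad_form I P z) \<ge> 0" by simp
qed

lemma psd_on_limit:
  assumes I: "finite I" and F: "F \<noteq> bot"
    and lim: "\<And>a b. a \<in> I \<Longrightarrow> b \<in> I \<Longrightarrow> ((\<lambda>S. P' S a b) \<longlongrightarrow> P a b) F"
    and psd: "eventually (\<lambda>S. psd_on I (P' S)) F"
  shows "psd_on I P"
  unfolding psd_on_iff_quad_form
proof
  fix z
  define C where "C = {c :: complex. Im c = 0 \<and> Re c \<ge> 0}"
  have "closed C" unfolding C_def
    by (intro closed_Collect_conj closed_Collect_eq closed_Collect_le continuous_intros)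
  moreover have "eventually (\<lambda>S. quad_form I (P' S) z \<in> C) F"
    using psd by eventually_elim (simp add: C_def psd_on_iff_quad_form)
  moreover have "((\<lambda>S. quad_form I (P' S) z) \<longlongrightarrow> quad_form I P z) F"
    unfolding quad_form_def using lim by (intro tendsto_sum tendsto_mult tendsto_const) auto
  ultimately have "quad_form I P z \<in> C" using F by (intro Lim_in_closed_set)
  then show "Im (quad_form I P z) = 0 \<and> Re (quad_form I P z) \<ge> 0" by (simp add: C_def)
qed

lemma l2_norm_nonneg: "l2_norm x \<ge> 0"
  unfolding l2_norm_def by (simp add: infsum_nonneg)

lemma l2_if_finite_sums_le:
  assumes "\<And>H. finite H \<Longrightarrow> (\<Sum>f\<in>H. (cmod (x f))\<^sup>2) \<le> C"
  shows "x \<in> l2" "l2_norm x \<le> sqrt C"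
proof -
  have sum: "(\<lambda>f. (cmod (x f))\<^sup>2) summable_on UNIV"
    by (rule nonneg_bdd_above_summable_on) (use assms in \<open>auto simp: bdd_above_def\<close>)
  then show "x \<in> l2" unfolding l2_def by simp
  have "infsum (\<lambda>f. (cmod (x f))\<^sup>2) UNIV \<le> C"
    by (rule infsum_le_finite_sums[OF sum]) (use assms in auto)
  then show "l2_norm x \<le> sqrt C" unfolding l2_norm_def by simp
qed

lemma l2_if_L2_set_le:
  assumes "\<And>H. finite H \<Longrightarrow> L2_set (\<lambda>f. cmod (x f)) H \<le> C"
  shows "x \<in> l2" "l2_norm x \<le> C"
proof -
  have C: "C \<ge> 0" using assms[of "{}"] by simp
  have "(\<Sum>f\<in>H. (cmod (x f))\<^sup>2) \<le> C\<^sup>2" if "finite H" for H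
    using sqrt_le_D[OF assms[OF that, unfolded L2_set_def]] .
  from l2_if_finite_sums_le[OF this] C show "x \<in> l2" "l2_norm x \<le> C" by simp_all
qed

lemma L2_set_le_l2_norm:
  assumes "x \<in> l2" "finite H"
  shows "L2_set (\<lambda>f. cmod (x f)) H \<le> l2_norm x"
proof -
  have "(\<Sum>f\<in>H. (cmod (x f))\<^sup>2) \<le> infsum (\<lambda>f. (cmod (x f))\<^sup>2) UNIV"
    by (rule finite_sum_le_infsum) (use assms in \<open>auto simp: l2_def\<close>)
  then show ?thesis unfolding L2_set_def l2_norm_def by (rule real_sqrt_le_mono)
qed

lemma l2_finite_support:
  assumes "finite S" "\<And>f. f \<notin> S \<Longrightarrow> x f = 0"
  shows "x \<in> l2" "l2_norm x = L2_set (\<lambda>f. cmod (x f)) S"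
    "l2_inner x y = (\<Sum>f\<in>S. x f * cnj (y f))"
proof -
  have "(\<lambda>f. (cmod (x f))\<^sup>2) summable_on S" using assms(1) by (rule summable_on_finite)
  moreover have "(\<lambda>f. (cmod (x f))\<^sup>2) summable_on S \<longleftrightarrow> (\<lambda>f. (cmod (x f))\<^sup>2) summable_on UNIV"
    by (rule summable_on_cong_neutral) (use assms in auto)
  ultimately show "x \<in> l2" unfolding l2_def by simp
  have "infsum (\<lambda>f. (cmod (x f))\<^sup>2) UNIV = infsum (\<lambda>f. (cmod (x f))\<^sup>2) S"
    by (rule infsum_cong_neutral) (use assms in auto)
  then show "l2_norm x = L2_set (\<lambda>f. cmod (x f)) S"
    unfolding l2_norm_def L2_set_def using assms(1) by simp
  have "l2_inner x y = infsum (\<lambda>f. x f * cnj (y f)) S"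
    unfolding l2_inner_def by (rule infsum_cong_neutral) (use assms in auto)
  then show "l2_inner x y = (\<Sum>f\<in>S. x f * cnj (y f))" using assms(1) by simp
qed

lemma l2_inner_has_sum:
  assumes "x \<in> l2" "y \<in> l2"
  shows "((\<lambda>f. x f * cnj (y f)) has_sum l2_inner x y) UNIV"
proof -
  have "(\<lambda>f. (cmod (x f))\<^sup>2 + (cmod (y f))\<^sup>2) summable_on UNIV"
    using assms unfolding l2_def by (intro summable_on_add) auto
  then have "(\<lambda>f. norm (x f * cnj (y f))) summable_on UNIV"
  proof (rule summable_on_comparison_test)
    show "norm (x f * cnj (y f)) \<le> (cmod (x f))\<^sup>2 + (cmod (y f))\<^sup>2" for f
    proof -
      have "norm (x f * cnj (y f)) = cmod (x f) * cmod (y f)" by (simp add: norm_mult)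
      moreover have "0 \<le> cmod (x f) * cmod (y f)" by simp
      ultimately show ?thesis using sum_squares_bound[of "cmod (x f)" "cmod (y f)"] by linarith
    qed
  qed simp
  then have "(\<lambda>f. x f * cnj (y f)) summable_on UNIV" by (rule abs_summable_summable)
  then show ?thesis unfolding l2_inner_def by (rule has_sum_infsum)
qed

lemma l2_norm_sum_le:
  assumes "finite I" "\<And>i. i \<in> I \<Longrightarrow> y i \<in> l2"
  shows "(\<lambda>f. \<Sum>i\<in>I. c i * y i f) \<in> l2"
    "l2_norm (\<lambda>f. \<Sum>i\<in>I. c i * y i f) \<le> (\<Sum>i\<in>I. cmod (c i) * l2_norm (y i))"
proof -
  have "L2_set (\<lambda>f. cmod (\<Sum>i\<in>I. c i * y i f)) H \<le> (\<Sum>i\<in>I. cmod (c i) * l2_norm (y i))"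
    if H: "finite H" for H
    using assms
  proof (induction I rule: finite_induct)
    case empty
    then show ?case by (simp add: L2_set_0')
  next
    case (insert j I)
    have "L2_set (\<lambda>f. cmod (\<Sum>i\<in>insert j I. c i * y i f)) H
        \<le> L2_set (\<lambda>f. cmod (c j * y j f) + cmod (\<Sum>i\<in>I. c i * y i f)) H"
      using insert.hyps by (intro L2_set_mono) (simp_all add: norm_triangle_ineq)
    also have "\<dots> \<le> L2_set (\<lambda>f. cmod (c j * y j f)) H + L2_set (\<lambda>f. cmod (\<Sum>i\<in>I. c i * y i f)) H"
      by (rule L2_set_triangle_ineq)
    also have "L2_set (\<lambda>f. cmod (c j * y j f)) H = cmod (c j) * L2_set (\<lambda>f. cmod (y j f)) H"
      by (simp add: norm_mult L2_set_right_distrib)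
    also have "\<dots> \<le> cmod (c j) * l2_norm (y j)"
      using insert.prems H by (intro mult_left_mono L2_set_le_l2_norm) auto
    also have "L2_set (\<lambda>f. cmod (\<Sum>i\<in>I. c i * y i f)) H \<le> (\<Sum>i\<in>I. cmod (c i) * l2_norm (y i))"
      using insert.IH insert.prems by simp
    finally show ?case using insert.hyps by simp
  qed
  note bound = this
  show "(\<lambda>f. \<Sum>i\<in>I. c i * y i f) \<in> l2"
    by (rule l2_if_L2_set_le(1)[OF bound])
  show "l2_norm (\<lambda>f. \<Sum>i\<in>I. c i * y i f) \<le> (\<Sum>i\<in>I. cmod (c i) * l2_norm (y i))"
    by (rule l2_if_L2_set_le(2)[OF bound])
qed

lemma l2_diff:
  assumes "x \<in> l2" "y \<in> l2"
  shows "(\<lambda>f. x f - y f) \<in> l2"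
proof (rule l2_if_L2_set_le)
  fix H :: "'a set" assume H: "finite H"
  have "L2_set (\<lambda>f. cmod (x f - y f)) H \<le> L2_set (\<lambda>f. cmod (x f) + cmod (y f)) H"
    by (intro L2_set_mono) (auto intro: norm_triangle_ineq4)
  also have "\<dots> \<le> L2_set (\<lambda>f. cmod (x f)) H + L2_set (\<lambda>f. cmod (y f)) H"
    by (rule L2_set_triangle_ineq)
  also have "\<dots> \<le> l2_norm x + l2_norm y"
    using assms H by (intro add_mono L2_set_le_l2_norm)
  finally show "L2_set (\<lambda>f. cmod (x f - y f)) H \<le> l2_norm x + l2_norm y" .
qed

lemma l2_norm_diff_triangle:
  assumes "x \<in> l2" "y \<in> l2" "z \<in> l2"
  shows "l2_norm (\<lambda>f. x f - z f) \<le> l2_norm (\<lambda>f. x f - y f) + l2_norm (\<lambda>f. z f - y f)"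
proof (rule l2_if_L2_set_le)
  fix H :: "'a set" assume H: "finite H"
  have "cmod (x f - z f) \<le> cmod (x f - y f) + cmod (z f - y f)" for f
    using norm_triangle_ineq4[of "x f - y f" "z f - y f"] by simp
  then have "L2_set (\<lambda>f. cmod (x f - z f)) H \<le> L2_set (\<lambda>f. cmod (x f - y f) + cmod (z f - y f)) H"
    by (intro L2_set_mono) auto
  also have "\<dots> \<le> L2_set (\<lambda>f. cmod (x f - y f)) H + L2_set (\<lambda>f. cmod (z f - y f)) H"
    by (rule L2_set_triangle_ineq)
  also have "\<dots> \<le> l2_norm (\<lambda>f. x f - y f) + l2_norm (\<lambda>f. z f - y f)"
    using assms H by (intro add_mono L2_set_le_l2_norm l2_diff)
  finally show "L2_set (\<lambda>f. cmod (x f - z f)) H \<le> \<dots>" .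
qed

lemma sup_norm_bound:
  fixes v :: "'a::topological_space \<Rightarrow> complex"
  assumes "compact (UNIV :: 'a set)" "continuous_on UNIV v"
  shows "cmod (v x) \<le> sup_norm v"
proof -
  have "bounded (range v)"
    by (rule compact_imp_bounded[OF compact_continuous_image[OF assms(2,1)]])
  then have "bdd_above (range (\<lambda>x. cmod (v x)))"
    by (auto simp: bounded_iff bdd_above_def)
  then show ?thesis unfolding sup_norm_def by (rule cSUP_upper[OF UNIV_I])
qed

lemma L2_set_integral_le:
  fixes h :: "'f \<Rightarrow> 'a \<Rightarrow> complex"
  assumes H: "finite H" and h: "\<And>f. f \<in> H \<Longrightarrow> integrable M (h f)" and G: "integrable M G"
    and bound: "AE x in M. L2_set (\<lambda>f. cmod (h f x)) H \<le> G x"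
  shows "L2_set (\<lambda>f. cmod (\<integral>x. h f x \<partial>M)) H \<le> (\<integral>x. G x \<partial>M)"
proof -
  define a where "a f = (\<integral>x. h f x \<partial>M)" for f
  define s where "s = L2_set (\<lambda>f. cmod (a f)) H"
  have "s\<^sup>2 = (\<Sum>f\<in>H. (cmod (a f))\<^sup>2)"
    unfolding s_def L2_set_def by (simp add: sum_nonneg)
  then have "complex_of_real (s\<^sup>2) = (\<Sum>f\<in>H. cnj (a f) * a f)"
    by (simp only: of_real_sum complex_norm_square mult.commute)
  also have "\<dots> = (\<integral>x. (\<Sum>f\<in>H. cnj (a f) * h f x) \<partial>M)"
    unfolding a_def using h by (simp add: Bochner_Integration.integral_sum)
  finally have "Re (complex_of_real (s\<^sup>2)) \<le> cmod (\<integral>x. (\<Sum>f\<in>H. cnj (a f) * h f x) \<partial>M)"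
    by (simp only: complex_Re_le_cmod)
  then have "s\<^sup>2 \<le> cmod (\<integral>x. (\<Sum>f\<in>H. cnj (a f) * h f x) \<partial>M)"
    by simp
  also have "\<dots> \<le> (\<integral>x. cmod (\<Sum>f\<in>H. cnj (a f) * h f x) \<partial>M)"
    by (rule integral_norm_bound)
  also have "\<dots> \<le> (\<integral>x. s * G x \<partial>M)"
  proof (rule integral_mono_AE)
    show "integrable M (\<lambda>x. cmod (\<Sum>f\<in>H. cnj (a f) * h f x))"
      using h by (intro integrable_norm Bochner_Integration.integrable_sum) auto
    show "AE x in M. cmod (\<Sum>f\<in>H. cnj (a f) * h f x) \<le> s * G x"
      using bound
    proof eventually_elim
      case (elim x)
      have "cmod (\<Sum>f\<in>H. cnj (a f) * h f x) \<le> (\<Sum>f\<in>H. \<bar>cmod (a f)\<bar> * \<bar>cmod (h f x)\<bar>)"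
        by (rule order_trans[OF norm_sum]) (simp add: norm_mult)
      also have "\<dots> \<le> s * L2_set (\<lambda>f. cmod (h f x)) H"
        unfolding s_def by (rule L2_set_mult_ineq)
      also have "\<dots> \<le> s * G x"
        using elim unfolding s_def by (rule mult_left_mono) simp
      finally show ?case .
    qed
  qed (use G in simp)
  also have "\<dots> = s * (\<integral>x. G x \<partial>M)" by simp
  finally have ss: "s * s \<le> s * (\<integral>x. G x \<partial>M)" by (simp add: power2_eq_square)
  have "s \<le> (\<integral>x. G x \<partial>M)"
  proof (cases "s = 0")
    case True
    have "AE x in M. 0 \<le> G x"
      using bound by eventually_elim (rule order_trans[OF L2_set_nonneg])
    then show ?thesis using True by (simp add: integral_nonneg_AE)
  next
    case False
    then have "s > 0" unfolding s_def using L2_set_nonneg by (simp add: order_less_le)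
    then show ?thesis using ss by simp
  qed
  then show ?thesis unfolding s_def a_def .
qed

lemma l2_inner_basis_vec: "l2_inner x (basis_vec u) = x u"
proof -
  have "l2_inner x (basis_vec u) = infsum (\<lambda>f. x f * cnj (basis_vec u f)) {u}"
    unfolding l2_inner_def by (rule infsum_cong_neutral) (auto simp: basis_vec_def)
  then show ?thesis by (simp add: basis_vec_def)
qed

lemma L2_set_cmod_mult_of_real:
  "L2_set (\<lambda>f. cmod (c * complex_of_real (d f))) H = cmod c * L2_set d H"
proof -
  have "L2_set (\<lambda>f. cmod (c * complex_of_real (d f))) H = L2_set (\<lambda>f. cmod c * d f) H"
    unfolding L2_set_def by (simp add: norm_mult power_mult_distrib)
  also have "\<dots> = cmod c * L2_set d H"
    by (simp add: L2_set_right_distrib)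
  finally show ?thesis .
qed

lemma sum_le_suminf_shift:
  fixes g :: "nat \<Rightarrow> real"
  assumes "summable g" "\<And>n. g n \<ge> 0" "finite K" "K \<subseteq> {J..}"
  shows "sum g K \<le> (\<Sum>k. g (k + J))"
proof -
  have "sum g K = sum (\<lambda>k. g (k + J)) ((\<lambda>j. j - J) ` K)"
    by (rule sum.reindex_bij_witness[of _ "\<lambda>k. k + J" "\<lambda>j. j - J"]) (use assms(4) in auto)
  also have "\<dots> \<le> (\<Sum>k. g (k + J))"
    by (rule sum_le_suminf) (use assms in auto)
  finally show ?thesis .
qed

lemma nuclear_CX_of_countable_family:
  fixes T :: "('a::topological_space \<Rightarrow> complex) \<Rightarrow> 'f \<Rightarrow> complex"
    and \<phi> :: "'i \<Rightarrow> ('a \<Rightarrow> complex) \<Rightarrow> complex" and y :: "'i \<Rightarrow> 'f \<Rightarrow> complex" and c :: "'i \<Rightarrow> real"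
  assumes I: "countable I"
    and T: "\<And>v. continuous_on UNIV v \<Longrightarrow> T v \<in> l2"
    and linear: "\<And>i v w a. i \<in> I \<Longrightarrow> continuous_on UNIV v \<Longrightarrow> continuous_on UNIV w \<Longrightarrow>
        \<phi> i (\<lambda>x. a * v x + w x) = a * \<phi> i v + \<phi> i w"
    and bounded: "\<And>i v. i \<in> I \<Longrightarrow> continuous_on UNIV v \<Longrightarrow> cmod (\<phi> i v) \<le> c i * sup_norm v"
    and c: "\<And>i. i \<in> I \<Longrightarrow> c i \<ge> 0" and y: "\<And>i. i \<in> I \<Longrightarrow> y i \<in> l2"
    and mass: "\<And>F. finite F \<Longrightarrow> F \<subseteq> I \<Longrightarrow> (\<Sum>i\<in>F. c i * l2_norm (y i)) \<le> B"
    and approx: "\<And>v \<epsilon>. continuous_on UNIV v \<Longrightarrow> \<epsilon> > 0 \<Longrightarrow> \<exists>G. finite G \<and> G \<subseteq> I \<and>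
        (\<forall>F. finite F \<and> G \<subseteq> F \<and> F \<subseteq> I \<longrightarrow> l2_norm (\<lambda>f. T v f - (\<Sum>i\<in>F. \<phi> i v * y i f)) \<le> \<epsilon>)"
  shows "nuclear_CX T"
proof -
  define enc where "enc = to_nat_on I"
  define P where "P N = {i \<in> I. enc i < N}" for N
  have inj: "inj_on enc I" unfolding enc_def using I by blast
  have index: "from_nat_into I n \<in> I" "enc (from_nat_into I n) = n" if "n \<in> enc ` I" for n
    using that I by (auto simp: enc_def)
  have P: "finite (P N)" "P N \<subseteq> I" for N
  proof -
    have "finite (enc ` P N)" by (rule finite_subset[of _ "{..<N}"]) (auto simp: P_def)
    then show "finite (P N)" using inj_on_subset[OF inj] by (auto simp: P_def dest: finite_imageD)
  qed (auto simp: P_def)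
  have reindex: "(\<Sum>n<N. if n \<in> enc ` I then g (from_nat_into I n) else 0) = (\<Sum>i\<in>P N. g i)"
    for N and g :: "'i \<Rightarrow> 'b::comm_monoid_add"
  proof -
    have "(\<Sum>n<N. if n \<in> enc ` I then g (from_nat_into I n) else 0) = (\<Sum>n\<in>enc ` P N. g (from_nat_into I n))"
      by (rule sum.mono_neutral_cong_right) (auto simp: P_def)
    also have "\<dots> = (\<Sum>i\<in>P N. g (from_nat_into I (enc i)))"
      using inj_on_subset[OF inj P(2)] by (simp add: sum.reindex)
    also have "\<dots> = (\<Sum>i\<in>P N. g i)"
      using I by (intro sum.cong) (auto simp: enc_def P_def)
    finally show ?thesis .
  qed
  define \<phi>' where "\<phi>' n = (if n \<in> enc ` I then \<phi> (from_nat_into I n) else (\<lambda>_. 0))" for n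
  define y' where "y' n = (if n \<in> enc ` I then y (from_nat_into I n) else (\<lambda>_. 0))" for n
  define c' where "c' n = (if n \<in> enc ` I then c (from_nat_into I n) else 0)" for n
  have partial_sum: "(\<Sum>n<N. \<phi>' n v * y' n f) = (\<Sum>i\<in>P N. \<phi> i v * y i f)" for N v f
    unfolding reindex[symmetric] \<phi>'_def y'_def by (intro sum.cong) auto
  have partial_mass: "(\<Sum>n<N. c' n * l2_norm (y' n)) = (\<Sum>i\<in>P N. c i * l2_norm (y i))" for N
    unfolding reindex[symmetric] c'_def y'_def by (intro sum.cong) auto
  have converges: "(\<lambda>N. l2_norm (\<lambda>f. T v f - (\<Sum>n<N. \<phi>' n v * y' n f))) \<longlonglongrightarrow> 0"
    if v: "continuous_on UNIV v" for v
  proof (rule metric_LIMSEQ_I)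
    fix r :: real assume "r > 0"
    then obtain G where G: "finite G" "G \<subseteq> I"
      and close: "\<And>F. finite F \<Longrightarrow> G \<subseteq> F \<Longrightarrow> F \<subseteq> I \<Longrightarrow>
        l2_norm (\<lambda>f. T v f - (\<Sum>i\<in>F. \<phi> i v * y i f)) \<le> r / 2"
      using approx[OF v, of "r / 2"] by auto
    show "\<exists>N0. \<forall>N\<ge>N0. dist (l2_norm (\<lambda>f. T v f - (\<Sum>n<N. \<phi>' n v * y' n f))) 0 < r"
    proof (intro exI allI impI)
      fix N assume N: "Suc (Max (insert 0 (enc ` G))) \<le> N"
      have "G \<subseteq> P N"
      proof
        fix i assume "i \<in> G"
        then have "enc i \<le> Max (insert 0 (enc ` G))" using G(1) by simp
        then show "i \<in> P N" using N G(2) \<open>i \<in> G\<close> by (auto simp: P_def)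
      qed
      then have "l2_norm (\<lambda>f. T v f - (\<Sum>n<N. \<phi>' n v * y' n f)) \<le> r / 2"
        unfolding partial_sum using close P by blast
      then show "dist (l2_norm (\<lambda>f. T v f - (\<Sum>n<N. \<phi>' n v * y' n f))) 0 < r"
        using \<open>r > 0\<close> l2_norm_nonneg[of "\<lambda>f. T v f - (\<Sum>n<N. \<phi>' n v * y' n f)"] by simp
    qed
  qed
  show ?thesis
    unfolding nuclear_CX_def
  proof (intro conjI allI impI exI)
    show "T v \<in> l2" if "continuous_on UNIV v" for v using T that .
    show "\<phi>' n (\<lambda>x. a * v x + w x) = a * \<phi>' n v + \<phi>' n w"
      if "continuous_on UNIV v \<and> continuous_on UNIV w" for n v w a
      using that linear index by (simp add: \<phi>'_def)
    show "cmod (\<phi>' n v) \<le> c' n * sup_norm v" if "continuous_on UNIV v" for n v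
      using that bounded index by (simp add: \<phi>'_def c'_def)
    show "c' n \<ge> 0" for n using c index by (simp add: c'_def)
    have "(\<lambda>_. 0) \<in> (l2 :: ('f \<Rightarrow> complex) set)"
      by (rule l2_finite_support(1)[of "{}"]) auto
    then show "y' n \<in> l2" for n
      using y index by (simp add: y'_def)
    show "summable (\<lambda>n. c' n * l2_norm (y' n))"
    proof (rule summableI_nonneg_bounded)
      show "c' n * l2_norm (y' n) \<ge> 0" for n
        using c index by (simp add: c'_def l2_norm_nonneg)
      show "(\<Sum>n<N. c' n * l2_norm (y' n)) \<le> B" for N
        unfolding partial_mass using mass P by blast
    qed
    show "(\<lambda>N. l2_norm (\<lambda>f. T v f - (\<Sum>n<N. \<phi>' n v * y' n f))) \<longlonglongrightarrow> 0"
      if "continuous_on UNIV v" for v using converges that .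
  qed
qed

lemma simple_function_indicator_sum:
  fixes h :: "'b \<Rightarrow> 'c::ring_1"
  assumes "simple_function M g" "x \<in> space M"
  shows "(\<Sum>w\<in>g ` space M. indicator (g -` {w} \<inter> space M) x * h w) = h (g x)"
proof -
  have "(\<Sum>w\<in>g ` space M. indicator (g -` {w} \<inter> space M) x * h w)
      = (\<Sum>w\<in>g ` space M. if w = g x then h w else 0)"
    using assms(2) by (intro sum.cong) (auto simp: indicator_def)
  also have "\<dots> = h (g x)" using assms simple_functionD(1)[OF assms(1)] by simp
  finally show ?thesis .
qed

lemma integrable_mult_indicator_field:
  fixes v :: "'a \<Rightarrow> 'b::{real_normed_field, banach, second_countable_topology}"
  assumes "integrable M v" "A \<in> sets M"
  shows "integrable M (\<lambda>x. v x * indicator A x)"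
  by (rule Bochner_Integration.integrable_bound[OF integrable_norm[OF assms(1)]])
    (use assms in \<open>auto simp: indicator_def\<close>)

lemma integral_mult_simple_function:
  fixes v :: "'a \<Rightarrow> 'b::{real_normed_field, banach, second_countable_topology}"
  assumes g: "simple_function M g" and v: "integrable M v"
  shows "integrable M (\<lambda>x. v x * h (g x))"
    "(\<integral>x. v x * h (g x) \<partial>M)
      = (\<Sum>w\<in>g ` space M. (\<integral>x. v x * indicator (g -` {w} \<inter> space M) x \<partial>M) * h w)"
proof -
  have parts: "integrable M (\<lambda>x. v x * indicator (g -` {w} \<inter> space M) x * h w)" for w
    using integrable_mult_indicator_field[OF v simple_functionD(2)[OF g]] by simp
  have eq: "v x * h (g x) = (\<Sum>w\<in>g ` space M. v x * indicator (g -` {w} \<inter> space M) x * h w)"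
    if "x \<in> space M" for x
  proof -
    have "v x * h (g x) = v x * (\<Sum>w\<in>g ` space M. indicator (g -` {w} \<inter> space M) x * h w)"
      by (simp only: simple_function_indicator_sum[OF g that])
    then show ?thesis by (simp add: sum_distrib_left mult.assoc)
  qed
  show "integrable M (\<lambda>x. v x * h (g x))"
    using parts by (subst Bochner_Integration.integrable_cong[OF refl eq]) auto
  have "(\<integral>x. v x * h (g x) \<partial>M) = (\<integral>x. (\<Sum>w\<in>g ` space M. v x * indicator (g -` {w} \<inter> space M) x * h w) \<partial>M)"
    by (rule Bochner_Integration.integral_cong[OF refl eq])
  also have "\<dots> = (\<Sum>w\<in>g ` space M. (\<integral>x. v x * indicator (g -` {w} \<inter> space M) x \<partial>M) * h w)"
    using parts by (simp add: Bochner_Integration.integral_sum)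
  finally show "(\<integral>x. v x * h (g x) \<partial>M)
      = (\<Sum>w\<in>g ` space M. (\<integral>x. v x * indicator (g -` {w} \<inter> space M) x \<partial>M) * h w)" .
qed

lemma integrable_continuous_compact:
  fixes v :: "'a::topological_space \<Rightarrow> complex"
  assumes "compact (UNIV :: 'a set)" "finite_measure M" "sets M = sets borel" "continuous_on UNIV v"
  shows "integrable M v"
proof -
  interpret finite_measure M by (rule assms(2))
  have "v \<in> borel_measurable M"
    using borel_measurable_continuous_onI[OF assms(4)] measurable_cong_sets[OF assms(3) refl] by blast
  then show ?thesis
    by (intro integrable_const_bound[where B = "sup_norm v"] AE_I2 sup_norm_bound assms(1,4))
qed

lemma nuclear_CX_of_simple_approximation:
  fixes M :: "'a::topological_space measure" and T :: "('a \<Rightarrow> complex) \<Rightarrow> 'f \<Rightarrow> complex"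
    and \<sigma> :: "nat \<Rightarrow> 'a \<Rightarrow> 'f \<Rightarrow> complex"
  assumes X: "compact (UNIV :: 'a set)" and M: "finite_measure M" "sets M = sets borel"
    and simple: "\<And>j. simple_function M (\<sigma> j)"
    and finite_support: "\<And>j x. finite {f. \<sigma> j x f \<noteq> 0}"
    and start: "\<And>x. \<sigma> 0 x = (\<lambda>_. 0)"
    and summable: "summable (\<lambda>j. \<integral>x. l2_norm (\<lambda>f. \<sigma> (Suc j) x f - \<sigma> j x f) \<partial>M)"
    and T: "\<And>v. continuous_on UNIV v \<Longrightarrow> T v \<in> l2"
    and approx: "\<And>v. continuous_on UNIV v \<Longrightarrow>
        (\<lambda>j. l2_norm (\<lambda>f. T v f - (\<integral>x. v x * \<sigma> j x f \<partial>M))) \<longlonglongrightarrow> 0"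
  shows "nuclear_CX T"
proof -
  interpret finite_measure M by (rule M(1))
  define D where "D j x = (\<lambda>f. \<sigma> (Suc j) x f - \<sigma> j x f)" for j x
  define A where "A j w = D j -` {w} \<inter> space M" for j w
  define mass where "mass j = (\<integral>x. l2_norm (D j x) \<partial>M)" for j
  define I where "I = (SIGMA j:UNIV. D j ` space M)"
  define \<phi> :: "nat \<times> ('f \<Rightarrow> complex) \<Rightarrow> ('a \<Rightarrow> complex) \<Rightarrow> complex"
    where "\<phi> i v = (\<integral>x. v x * indicator (A (fst i) (snd i)) x \<partial>M)" for i v
  define c where "c i = measure M (A (fst i) (snd i))" for i
  have D: "simple_function M (D j)" for j
    unfolding D_def using simple_function_compose2[OF simple simple, of "\<lambda>a b f. a f - b f"] by simp
  have A: "A j w \<in> sets M" for j w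
    unfolding A_def using simple_functionD(2)[OF D] .
  have values_finite: "finite (D j ` space M)" for j
    using simple_functionD(1)[OF D] .
  have D_l2: "D j x \<in> l2" for j x
  proof (rule l2_finite_support(1))
    show "finite ({f. \<sigma> (Suc j) x f \<noteq> 0} \<union> {f. \<sigma> j x f \<noteq> 0})"
      using finite_support by simp
  qed (auto simp: D_def)
  have v_int: "integrable M v" if "continuous_on UNIV v" for v :: "'a \<Rightarrow> complex"
    using integrable_continuous_compact[OF X M that] .
  have block: "(\<Sum>w\<in>D j ` space M. (\<integral>x. v x * indicator (A j w) x \<partial>M) * h w)
      = (\<integral>x. v x * h (D j x) \<partial>M)"
    "integrable M (\<lambda>x. v x * h (D j x))"
    if "integrable M v" for j v and h :: "_ \<Rightarrow> complex"
    using integral_mult_simple_function[OF D that, of h] unfolding A_def by simp_all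
  have mass: "(\<Sum>w\<in>D j ` space M. c (j, w) * l2_norm w) = mass j" for j
    using integral_mult_simple_function(2)[OF D, of "\<lambda>_. 1 :: real" l2_norm] A
    by (simp add: c_def mass_def A_def)
  have mass_nonneg: "mass j \<ge> 0" for j
    unfolding mass_def by (simp add: l2_norm_nonneg)
  have mass_summable: "summable mass"
    using summable unfolding mass_def D_def .
  have sum_le_mass: "(\<Sum>i\<in>F. c i * l2_norm (snd i)) \<le> (\<Sum>j\<in>K. mass j)"
    if "finite K" "F \<subseteq> (SIGMA j:K. D j ` space M)" for F K
  proof -
    have "(\<Sum>i\<in>F. c i * l2_norm (snd i)) \<le> (\<Sum>i\<in>(SIGMA j:K. D j ` space M). c i * l2_norm (snd i))"
      using that values_finite by (intro sum_mono2) (auto simp: c_def l2_norm_nonneg)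
    also have "\<dots> = (\<Sum>j\<in>K. \<Sum>w\<in>D j ` space M. c (j, w) * l2_norm w)"
      using that(1) values_finite by (subst sum.Sigma) (auto simp: case_prod_beta)
    also have "\<dots> = (\<Sum>j\<in>K. mass j)"
      by (simp add: mass)
    finally show ?thesis .
  qed
  have \<phi>_bound: "cmod (\<phi> i v) \<le> c i * sup_norm v" if "continuous_on UNIV v" for i v
  proof -
    have "cmod (\<phi> i v) \<le> (\<integral>x. cmod (v x * indicator (A (fst i) (snd i)) x) \<partial>M)"
      unfolding \<phi>_def by (rule integral_norm_bound)
    also have "\<dots> \<le> (\<integral>x. sup_norm v * indicator (A (fst i) (snd i)) x \<partial>M)"
      using that A by (intro integral_mono integrable_norm integrable_mult_indicator_field v_int)
        (auto simp: indicator_def intro: sup_norm_bound[OF X])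
    also have "\<dots> = c i * sup_norm v" using A by (simp add: c_def)
    finally show ?thesis .
  qed
  have D_I: "snd i \<in> l2" if "i \<in> I" for i using that D_l2 by (auto simp: I_def)
  show ?thesis
  proof (rule nuclear_CX_of_countable_family[where I = I and \<phi> = \<phi> and y = snd and c = c
        and B = "suminf mass"])
    show "countable I"
      unfolding I_def using values_finite by (auto intro: countable_finite)
    show "T v \<in> l2" if "continuous_on UNIV v" for v using T that .
    show "\<phi> i (\<lambda>x. a * v x + w x) = a * \<phi> i v + \<phi> i w"
      if "continuous_on UNIV v" "continuous_on UNIV w" for i v w a
    proof -
      have "integrable M (\<lambda>x. v x * indicator (A (fst i) (snd i)) x)"
        "integrable M (\<lambda>x. w x * indicator (A (fst i) (snd i)) x)"
        using that by (auto intro: integrable_mult_indicator_field v_int A)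
      then show ?thesis unfolding \<phi>_def by (simp add: distrib_right mult.assoc)
    qed
    show "cmod (\<phi> i v) \<le> c i * sup_norm v" if "continuous_on UNIV v" for i v
      using \<phi>_bound that .
    show "c i \<ge> 0" for i by (simp add: c_def)
    show "snd i \<in> l2" if "i \<in> I" for i using D_I that .
    show "(\<Sum>i\<in>F. c i * l2_norm (snd i)) \<le> suminf mass" if "finite F" "F \<subseteq> I" for F
    proof -
      have le_Max: "fst i \<le> Max (fst ` F)" if "i \<in> F" for i
        using \<open>finite F\<close> that by simp
      have "(\<Sum>i\<in>F. c i * l2_norm (snd i)) \<le> (\<Sum>j\<in>{..Max (fst ` F)}. mass j)"
        by (intro sum_le_mass) (use that le_Max in \<open>force simp: I_def\<close>)+
      also have "\<dots> \<le> suminf mass"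
        using sum_le_suminf_shift[OF mass_summable mass_nonneg, of "{..Max (fst ` F)}" 0] by simp
      finally show ?thesis .
    qed
    show "\<exists>G. finite G \<and> G \<subseteq> I \<and> (\<forall>F. finite F \<and> G \<subseteq> F \<and> F \<subseteq> I \<longrightarrow>
        l2_norm (\<lambda>f. T v f - (\<Sum>i\<in>F. \<phi> i v * snd i f)) \<le> \<epsilon>)"
      if v: "continuous_on UNIV v" and "\<epsilon> > 0" for v \<epsilon>
    proof -
      define B where "B = sup_norm v"
      have B: "B \<ge> 0"
        unfolding B_def using sup_norm_bound[OF X v] norm_ge_zero order_trans by blast
      have "eventually (\<lambda>J. l2_norm (\<lambda>f. T v f - (\<integral>x. v x * \<sigma> J x f \<partial>M)) < \<epsilon> / 2) sequentially"
        using order_tendstoD(2)[OF approx[OF v], of "\<epsilon> / 2"] \<open>\<epsilon> > 0\<close> by simp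
      moreover have "eventually (\<lambda>J. B * (\<Sum>k. mass (k + J)) < \<epsilon> / 2) sequentially"
      proof -
        have "(\<lambda>J. B * (\<Sum>k. mass (k + J))) \<longlonglongrightarrow> B * 0"
          by (intro tendsto_mult_left suminf_exist_split2 mass_summable)
        then show ?thesis using order_tendstoD(2)[of _ "B * 0" _ "\<epsilon> / 2"] \<open>\<epsilon> > 0\<close> by simp
      qed
      ultimately have "eventually (\<lambda>J. l2_norm (\<lambda>f. T v f - (\<integral>x. v x * \<sigma> J x f \<partial>M)) < \<epsilon> / 2
          \<and> B * (\<Sum>k. mass (k + J)) < \<epsilon> / 2) sequentially"
        by (rule eventually_conj)
      then obtain J where J: "l2_norm (\<lambda>f. T v f - (\<integral>x. v x * \<sigma> J x f \<partial>M)) < \<epsilon> / 2"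
        "B * (\<Sum>k. mass (k + J)) < \<epsilon> / 2"
        unfolding eventually_sequentially by blast
      define G where "G = (SIGMA j:{..<J}. D j ` space M)"
      have G: "finite G" "G \<subseteq> I"
        using values_finite by (auto simp: G_def I_def)
      have sum_G: "(\<Sum>i\<in>G. \<phi> i v * snd i f) = (\<integral>x. v x * \<sigma> J x f \<partial>M)" for f
      proof -
        have "(\<Sum>i\<in>G. \<phi> i v * snd i f)
            = (\<Sum>j<J. \<Sum>w\<in>D j ` space M. (\<integral>x. v x * indicator (A j w) x \<partial>M) * w f)"
          unfolding G_def \<phi>_def using values_finite by (subst sum.Sigma) (auto simp: case_prod_beta)
        also have "\<dots> = (\<Sum>j<J. \<integral>x. v x * D j x f \<partial>M)"
          using block(1)[OF v_int[OF v]] by simp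
        also have "\<dots> = (\<integral>x. (\<Sum>j<J. v x * D j x f) \<partial>M)"
          using block(2)[OF v_int[OF v], of "\<lambda>w. w f"]
          by (intro Bochner_Integration.integral_sum[symmetric]) simp
        also have "\<dots> = (\<integral>x. v x * \<sigma> J x f \<partial>M)"
        proof (rule Bochner_Integration.integral_cong[OF refl])
          fix x
          have "(\<Sum>j<J. D j x f) = \<sigma> J x f"
            using sum_lessThan_telescope[of "\<lambda>n. \<sigma> n x f" J] start by (simp add: D_def)
          then show "(\<Sum>j<J. v x * D j x f) = v x * \<sigma> J x f"
            by (simp add: sum_distrib_left[symmetric])
        qed
        finally show ?thesis .
      qed
      show ?thesis
      proof (intro exI[of _ G] conjI allI impI G)
        fix F assume F: "finite F \<and> G \<subseteq> F \<and> F \<subseteq> I"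
        have sum_l2: "(\<lambda>f. \<Sum>i\<in>K. \<phi> i v * snd i f) \<in> l2" if "K \<subseteq> F" for K
          by (rule l2_norm_sum_le(1)) (use F that D_I in \<open>auto intro: finite_subset\<close>)
        have F_minus_G: "F - G \<subseteq> (SIGMA j:{J..Max (fst ` F)}. D j ` space M)"
        proof
          fix i assume i: "i \<in> F - G"
          then have "fst i \<le> Max (fst ` F)" using F by simp
          moreover have "i \<in> I" using i F by blast
          ultimately show "i \<in> (SIGMA j:{J..Max (fst ` F)}. D j ` space M)"
            using i by (cases i) (auto simp: G_def I_def not_less)
        qed
        have "l2_norm (\<lambda>f. \<Sum>i\<in>F - G. \<phi> i v * snd i f) \<le> (\<Sum>i\<in>F - G. cmod (\<phi> i v) * l2_norm (snd i))"
          by (rule l2_norm_sum_le(2)) (use F D_I in auto)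
        also have "\<dots> \<le> (\<Sum>i\<in>F - G. B * (c i * l2_norm (snd i)))"
        proof (rule sum_mono)
          fix i
          show "cmod (\<phi> i v) * l2_norm (snd i) \<le> B * (c i * l2_norm (snd i))"
            using mult_right_mono[OF \<phi>_bound[OF v, of i] l2_norm_nonneg[of "snd i"]]
            by (simp add: B_def ac_simps)
        qed
        also have "\<dots> = B * (\<Sum>i\<in>F - G. c i * l2_norm (snd i))"
          by (simp add: sum_distrib_left)
        also have "\<dots> \<le> B * (\<Sum>j\<in>{J..Max (fst ` F)}. mass j)"
          using F_minus_G B by (intro mult_left_mono sum_le_mass) auto
        also have "\<dots> \<le> B * (\<Sum>k. mass (k + J))"
          using B by (intro mult_left_mono sum_le_suminf_shift mass_summable mass_nonneg) auto
        finally have tail: "l2_norm (\<lambda>f. \<Sum>i\<in>F - G. \<phi> i v * snd i f) < \<epsilon> / 2"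
          using J(2) by simp
        have "l2_norm (\<lambda>f. T v f - (\<Sum>i\<in>F. \<phi> i v * snd i f))
            \<le> l2_norm (\<lambda>f. T v f - (\<Sum>i\<in>G. \<phi> i v * snd i f))
              + l2_norm (\<lambda>f. (\<Sum>i\<in>F. \<phi> i v * snd i f) - (\<Sum>i\<in>G. \<phi> i v * snd i f))"
          using F by (intro l2_norm_diff_triangle T v sum_l2) auto
        also have "(\<lambda>f. (\<Sum>i\<in>F. \<phi> i v * snd i f) - (\<Sum>i\<in>G. \<phi> i v * snd i f))
            = (\<lambda>f. \<Sum>i\<in>F - G. \<phi> i v * snd i f)"
          using F by (simp add: sum_diff)
        finally show "l2_norm (\<lambda>f. T v f - (\<Sum>i\<in>F. \<phi> i v * snd i f)) \<le> \<epsilon>"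
          using J(1) tail unfolding sum_G by simp
      qed
    qed
  qed
qed

definition grid_round :: "nat \<Rightarrow> real \<Rightarrow> real" where
  "grid_round N t = (if \<bar>t\<bar> \<le> real (Suc N) then real_of_int \<lfloor>t * real (Suc N)\<rfloor> / real (Suc N) else 0)"

lemma grid_round_error:
  assumes "\<bar>t\<bar> \<le> real (Suc N)"
  shows "\<bar>t - grid_round N t\<bar> \<le> 1 / real (Suc N)"
proof -
  define n where "n = real (Suc N)"
  have n: "n > 0" unfolding n_def by simp
  have "t - grid_round N t = (t * n - real_of_int \<lfloor>t * n\<rfloor>) / n"
    using assms n unfolding grid_round_def n_def by (simp add: field_simps)
  moreover have "0 \<le> t * n - real_of_int \<lfloor>t * n\<rfloor>" "t * n - real_of_int \<lfloor>t * n\<rfloor> \<le> 1"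
    by linarith+
  ultimately show ?thesis using n unfolding n_def by (simp add: divide_right_mono)
qed

lemma grid_round_error_square: "(t - grid_round N t)\<^sup>2 \<le> t\<^sup>2 + (1 / real (Suc N))\<^sup>2"
proof (cases "\<bar>t\<bar> \<le> real (Suc N)")
  case True
  then have "(t - grid_round N t)\<^sup>2 \<le> (1 / real (Suc N))\<^sup>2"
    using grid_round_error power2_le_iff_abs_le[of "1 / real (Suc N)"] by simp
  then show ?thesis by (simp add: add_increasing)
qed (simp add: grid_round_def)

lemma grid_round_measurable[measurable]:
  assumes [measurable]: "g \<in> borel_measurable M"
  shows "(\<lambda>x. grid_round N (g x)) \<in> borel_measurable M"
  unfolding grid_round_def by measurable

lemma finite_range_grid_round: "finite (range (grid_round N))"
proof -
  define n :: int where "n = int (Suc N)"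
  have "range (grid_round N) \<subseteq> insert 0 ((\<lambda>i. real_of_int i / real (Suc N)) ` {-(n * n)..n * n})"
  proof
    fix y assume "y \<in> range (grid_round N)"
    then obtain t where y: "y = grid_round N t" by blast
    show "y \<in> insert 0 ((\<lambda>i. real_of_int i / real (Suc N)) ` {-(n * n)..n * n})"
    proof (cases "\<bar>t\<bar> \<le> real (Suc N)")
      case True
      then have "\<bar>t * real (Suc N)\<bar> \<le> real_of_int (n * n)"
        unfolding n_def by (simp add: abs_mult mult_right_mono)
      then have "\<lfloor>t * real (Suc N)\<rfloor> \<in> {-(n * n)..n * n}"
        by (simp add: floor_le_iff le_floor_iff; linarith)
      then show ?thesis using y True unfolding grid_round_def by auto
    qed (use y in \<open>simp add: grid_round_def\<close>)
  qed
  then show ?thesis by (rule finite_subset) simp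
qed

lemma grid_round_abs_le: "\<bar>grid_round N t\<bar> \<le> \<bar>t\<bar> + 1"
proof (cases "\<bar>t\<bar> \<le> real (Suc N)")
  case True
  then have "\<bar>t - grid_round N t\<bar> \<le> 1"
    using grid_round_error[OF True] by (simp add: divide_le_eq_1 order_trans)
  then show ?thesis by linarith
qed (simp add: grid_round_def)

locale pointwise_H_support =
  fixes M :: "'a::t2_space measure" and e :: 'f and k :: "'f \<Rightarrow> 'a \<Rightarrow> real"
  assumes X_compact: "compact (UNIV :: 'a set)"
    and radon: "radon_prob M"
    and supp: "unital_H_support_L2 M e k"
    and ke_nonneg: "AE x in M. k e x \<ge> 0"
    and sq_le: "AE x in M. (\<lambda>f. (k f x)\<^sup>2) summable_on (UNIV - {e}) \<and>
                           infsum (\<lambda>f. (k f x)\<^sup>2) (UNIV - {e}) \<le> (k e x)\<^sup>2"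

sublocale pointwise_H_support \<subseteq> prob_space M
  using radon unfolding radon_prob_def by (elim conjE)

context pointwise_H_support
begin

lemma sets_M: "sets M = sets borel"
  using radon unfolding radon_prob_def by (elim conjE)

lemma k_measurable[measurable]: "k f \<in> borel_measurable M"
  using supp unfolding unital_H_support_L2_def L2r_def by simp

lemma k_square_integrable: "integrable M (\<lambda>x. (k f x)\<^sup>2)"
  using supp unfolding unital_H_support_L2_def L2r_def by simp

lemma k_integrable: "integrable M (k f)"
  by (rule square_integrable_imp_integrable[OF k_measurable k_square_integrable])

lemma integral_k_unit: "(\<integral>x. k e x \<partial>M) = 1"
  using supp unfolding unital_H_support_L2_def by simp

lemma integral_k_other: "f \<noteq> e \<Longrightarrow> (\<integral>x. k f x \<partial>M) = 0"
  using supp unfolding unital_H_support_L2_def by simp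

definition dominated :: "'a \<Rightarrow> bool" where
  "dominated x \<longleftrightarrow> k e x \<ge> 0 \<and> (\<forall>H. finite H \<longrightarrow> e \<notin> H \<longrightarrow> (\<Sum>f\<in>H. (k f x)\<^sup>2) \<le> (k e x)\<^sup>2)"

lemma dominatedD:
  assumes "dominated x"
  shows "k e x \<ge> 0" "\<And>H. finite H \<Longrightarrow> e \<notin> H \<Longrightarrow> (\<Sum>f\<in>H. (k f x)\<^sup>2) \<le> (k e x)\<^sup>2"
  using assms unfolding dominated_def by auto

lemma AE_dominated: "AE x in M. dominated x"
  using ke_nonneg sq_le
proof eventually_elim
  case (elim x)
  have "(\<Sum>f\<in>H. (k f x)\<^sup>2) \<le> (k e x)\<^sup>2" if "finite H" "e \<notin> H" for H
  proof -
    have "(\<Sum>f\<in>H. (k f x)\<^sup>2) \<le> infsum (\<lambda>f. (k f x)\<^sup>2) (UNIV - {e})"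
      using elim that by (intro finite_sum_le_infsum) auto
    then show ?thesis using elim by linarith
  qed
  then show ?case using elim by (simp add: dominated_def)
qed

lemma dominated_L2_set_le:
  assumes "dominated x" "finite H" "e \<notin> H"
  shows "L2_set (\<lambda>f. k f x) H \<le> k e x"
proof -
  have "L2_set (\<lambda>f. k f x) H \<le> sqrt ((k e x)\<^sup>2)"
    unfolding L2_set_def using dominatedD(2)[OF assms] by (rule real_sqrt_le_mono)
  then show ?thesis using dominatedD(1)[OF assms(1)] by simp
qed

lemma dominated_abs_le:
  assumes "dominated x"
  shows "\<bar>k f x\<bar> \<le> k e x"
proof (cases "f = e")
  case False
  then have "(\<Sum>g\<in>{f}. (k g x)\<^sup>2) \<le> (k e x)\<^sup>2"
    by (intro dominatedD(2)[OF assms]) auto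
  then show ?thesis using dominatedD(1)[OF assms] abs_le_square_iff[of "k f x" "k e x"] by simp
qed (use dominatedD(1)[OF assms] in simp)

lemma dominated_sum_square_le:
  assumes "dominated x" "finite G"
  shows "(\<Sum>f\<in>G. (k f x)\<^sup>2) \<le> 2 * (k e x)\<^sup>2"
proof -
  have "(\<Sum>f\<in>G. (k f x)\<^sup>2) \<le> (\<Sum>f\<in>insert e G. (k f x)\<^sup>2)"
    using assms(2) by (intro sum_mono2) auto
  also have "\<dots> = (k e x)\<^sup>2 + (\<Sum>f\<in>G - {e}. (k f x)\<^sup>2)"
    using assms(2) by (simp add: sum.insert_remove)
  moreover have "(\<Sum>f\<in>G - {e}. (k f x)\<^sup>2) \<le> (k e x)\<^sup>2"
    using assms by (intro dominatedD(2)) auto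
  ultimately show ?thesis by linarith
qed

lemma continuous_measurable:
  assumes "continuous_on UNIV v"
  shows "v \<in> borel_measurable M"
  using borel_measurable_continuous_onI[OF assms] unfolding measurable_cong_sets[OF sets_M refl] .

lemma integrable_continuous_mult_k:
  fixes v :: "'a \<Rightarrow> complex"
  assumes "continuous_on UNIV v"
  shows "integrable M (\<lambda>x. v x * k f x)"
proof (rule Bochner_Integration.integrable_bound[of _ "\<lambda>x. sup_norm v * k f x"])
  show "integrable M (\<lambda>x. sup_norm v * k f x)" using k_integrable by simp
  show "(\<lambda>x. v x * k f x) \<in> borel_measurable M" using continuous_measurable[OF assms] by measurable
  have "norm (v x * k f x) \<le> norm (sup_norm v * k f x)" for x
  proof -
    have "sup_norm v \<ge> 0" using sup_norm_bound[OF X_compact assms] norm_ge_zero order_trans by blast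
    then show ?thesis
      using mult_right_mono[OF sup_norm_bound[OF X_compact assms, of x] abs_ge_zero[of "k f x"]]
      by (simp add: norm_mult abs_mult)
  qed
  then show "AE x in M. norm (v x * k f x) \<le> norm (sup_norm v * k f x)" by simp
qed

lemma integrable_norm_mult_k_unit:
  fixes v :: "'a \<Rightarrow> complex"
  assumes "continuous_on UNIV v"
  shows "integrable M (\<lambda>x. cmod (v x) * k e x)"
  by (rule Bochner_Integration.integrable_bound[OF integrable_norm[OF integrable_continuous_mult_k[OF assms, of e]]])
    (use continuous_measurable[OF assms] in \<open>auto simp: norm_mult abs_mult\<close>)

lemma Tk_L2_set_le:
  fixes v :: "'a \<Rightarrow> complex"
  assumes v: "continuous_on UNIV v" and H: "finite H" "e \<notin> H"
  shows "L2_set (\<lambda>f. cmod (Tk M k v f)) H \<le> (\<integral>x. cmod (v x) * k e x \<partial>M)"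
  unfolding Tk_def
proof (rule L2_set_integral_le[OF H(1) integrable_continuous_mult_k[OF v] integrable_norm_mult_k_unit[OF v]])
  show "AE x in M. L2_set (\<lambda>f. cmod (v x * complex_of_real (k f x))) H \<le> cmod (v x) * k e x"
    using AE_dominated
  proof eventually_elim
    case (elim x)
    have "L2_set (\<lambda>f. cmod (v x * complex_of_real (k f x))) H = L2_set (\<lambda>f. cmod (v x) * k f x) H"
      unfolding L2_set_def by (simp add: norm_mult power_mult_distrib)
    also have "\<dots> = cmod (v x) * L2_set (\<lambda>f. k f x) H"
      by (simp add: L2_set_right_distrib)
    also have "\<dots> \<le> cmod (v x) * k e x"
      using dominated_L2_set_le[OF elim H] by (rule mult_left_mono) simp
    finally show ?case .
  qed
qed

lemma Tk_unit_le:
  fixes v :: "'a \<Rightarrow> complex"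
  assumes "continuous_on UNIV v"
  shows "cmod (Tk M k v e) \<le> (\<integral>x. cmod (v x) * k e x \<partial>M)"
proof -
  have "cmod (Tk M k v e) \<le> (\<integral>x. cmod (v x * complex_of_real (k e x)) \<partial>M)"
    unfolding Tk_def by (rule integral_norm_bound)
  also have "\<dots> = (\<integral>x. cmod (v x) * k e x \<partial>M)"
    by (rule integral_cong_AE) (use ke_nonneg continuous_measurable[OF assms] in \<open>auto simp: norm_mult\<close>)
  finally show ?thesis .
qed

lemma Tk_l2:
  fixes v :: "'a \<Rightarrow> complex"
  assumes v: "continuous_on UNIV v"
  shows "Tk M k v \<in> l2" "l2_norm (Tk M k v) \<le> sqrt 2 * (\<integral>x. cmod (v x) * k e x \<partial>M)"
proof -
  define C where "C = (\<integral>x. cmod (v x) * k e x \<partial>M)"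
  have C: "C \<ge> 0" unfolding C_def using ke_nonneg by (intro integral_nonneg_AE) auto
  have "(\<Sum>f\<in>H. (cmod (Tk M k v f))\<^sup>2) \<le> 2 * C\<^sup>2" if H: "finite H" for H
  proof -
    have "(\<Sum>f\<in>H. (cmod (Tk M k v f))\<^sup>2) \<le> (\<Sum>f\<in>insert e H. (cmod (Tk M k v f))\<^sup>2)"
      using H by (intro sum_mono2) auto
    also have "\<dots> = (cmod (Tk M k v e))\<^sup>2 + (L2_set (\<lambda>f. cmod (Tk M k v f)) (H - {e}))\<^sup>2"
      using H by (simp add: sum.insert_remove L2_set_def sum_nonneg)
    also have "\<dots> \<le> C\<^sup>2 + C\<^sup>2"
      using Tk_unit_le[OF v] Tk_L2_set_le[OF v, of "H - {e}"] H unfolding C_def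
      by (intro add_mono power_mono) auto
    finally show ?thesis by simp
  qed
  from l2_if_finite_sums_le[OF this]
  show "Tk M k v \<in> l2" "l2_norm (Tk M k v) \<le> sqrt 2 * C"
    using C by (simp_all add: real_sqrt_mult)
qed

lemma Tk_one: "Tk M k (\<lambda>_. 1) = basis_vec e"
  using integral_k_unit integral_k_other by (auto simp: Tk_def basis_vec_def)

lemma Tk_herm_cone:
  fixes v :: "'a \<Rightarrow> complex"
  assumes v: "continuous_on UNIV v" and nonneg: "\<And>x. Im (v x) = 0 \<and> Re (v x) \<ge> 0"
  shows "Tk M k v \<in> herm_cone e"
proof -
  have v_real: "v x = complex_of_real (Re (v x))" "cmod (v x) = Re (v x)" for x
    using nonneg[of x] by (auto simp: complex_eq_iff cmod_eq_Re)
  have real: "Tk M k v f = complex_of_real (\<integral>x. Re (v x) * k f x \<partial>M)" for f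
    unfolding Tk_def by (subst v_real(1)) (simp flip: integral_complex_of_real)
  have "l2_star (Tk M k v) = Tk M k v"
    unfolding l2_star_def by (rule ext) (simp add: real)
  moreover have "Re (l2_inner (Tk M k v) (basis_vec e)) = (\<integral>x. cmod (v x) * k e x \<partial>M)"
    by (simp add: l2_inner_basis_vec real v_real(2))
  ultimately show ?thesis
    unfolding herm_cone_def using Tk_l2[OF v] by simp
qed

definition kernel_on :: "'f set \<Rightarrow> 'a \<Rightarrow> 'f \<Rightarrow> complex" where
  "kernel_on S x = (\<lambda>f. if f \<in> S then complex_of_real (k f x) else 0)"

lemma kernel_on_herm_cone:
  assumes S: "finite S" "e \<in> S" and x: "dominated x"
  shows "kernel_on S x \<in> herm_cone e"
proof -
  have support: "kernel_on S x f = 0" if "f \<notin> S" for f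
    using that by (simp add: kernel_on_def)
  have "l2_norm (kernel_on S x) = L2_set (\<lambda>f. cmod (kernel_on S x f)) S"
    by (rule l2_finite_support(2)[OF S(1) support])
  also have "\<dots> = sqrt (\<Sum>f\<in>S. (k f x)\<^sup>2)"
    unfolding L2_set_def by (intro arg_cong[where f = sqrt] sum.cong) (auto simp: kernel_on_def)
  also have "\<dots> = sqrt ((k e x)\<^sup>2 + (\<Sum>f\<in>S - {e}. (k f x)\<^sup>2))"
    using S by (simp add: sum.remove)
  also have "\<dots> \<le> sqrt (2 * (k e x)\<^sup>2)"
    using dominatedD(2)[OF x, of "S - {e}"] S by simp
  also have "\<dots> = sqrt 2 * k e x"
    using dominatedD(1)[OF x] by (simp add: real_sqrt_mult)
  finally show ?thesis
    unfolding herm_cone_def using l2_finite_support(1)[OF S(1) support] S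
    by (simp add: l2_inner_basis_vec l2_star_def kernel_on_def fun_eq_iff)
qed

lemma Tk_partial_inner:
  fixes v :: "'a \<Rightarrow> complex"
  assumes v: "continuous_on UNIV v" and S: "finite S"
  shows "integrable M (\<lambda>x. v x * l2_inner (kernel_on S x) \<eta>)"
    "(\<Sum>f\<in>S. Tk M k v f * cnj (\<eta> f)) = (\<integral>x. v x * l2_inner (kernel_on S x) \<eta> \<partial>M)"
proof -
  have inner: "v x * l2_inner (kernel_on S x) \<eta> = (\<Sum>f\<in>S. cnj (\<eta> f) * (v x * complex_of_real (k f x)))" for x
    by (subst l2_finite_support(3)[OF S]) (auto simp: kernel_on_def sum_distrib_left ac_simps)
  have parts: "integrable M (\<lambda>x. cnj (\<eta> f) * (v x * complex_of_real (k f x)))" for f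
    using integrable_continuous_mult_k[OF v] by simp
  show "integrable M (\<lambda>x. v x * l2_inner (kernel_on S x) \<eta>)"
    unfolding inner using parts by simp
  have "(\<Sum>f\<in>S. Tk M k v f * cnj (\<eta> f)) = (\<Sum>f\<in>S. \<integral>x. cnj (\<eta> f) * (v x * complex_of_real (k f x)) \<partial>M)"
    unfolding Tk_def by (simp add: mult.commute)
  also have "\<dots> = (\<integral>x. v x * l2_inner (kernel_on S x) \<eta> \<partial>M)"
    unfolding inner using parts by (simp add: Bochner_Integration.integral_sum)
  finally show "(\<Sum>f\<in>S. Tk M k v f * cnj (\<eta> f)) = (\<integral>x. v x * l2_inner (kernel_on S x) \<eta> \<partial>M)" .
qed

lemma Tk_hermitian:
  fixes n :: nat
  assumes psd: "\<And>x. psd_on {..<n} (\<lambda>i j. v i j x)" and ij: "i < n" "j < n"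
  shows "Tk M k (v i j) = l2_star (Tk M k (v j i))"
proof
  fix f
  have "v i j x = cnj (v j i x)" for x
    by (rule psd_on_hermitian[OF psd[of x]]) (use ij in auto)
  then show "Tk M k (v i j) f = l2_star (Tk M k (v j i)) f"
    unfolding Tk_def l2_star_def using Bochner_Integration.integral_cnj[of M "\<lambda>x. v j i x * complex_of_real (k f x)"]
    by simp
qed

lemma Tk_max_cone:
  assumes cont: "\<forall>i<n. \<forall>j<n. continuous_on UNIV (v i j)"
    and psd: "\<forall>x. psd_on {..<n} (\<lambda>i j. v i j x)"
  shows "max_cone e n (\<lambda>i j. Tk M k (v i j))"
  unfolding max_cone_def
proof (intro conjI allI impI)
  fix i j assume "i < n" "j < n"
  then show "Tk M k (v i j) \<in> l2"
    using cont by (intro Tk_l2(1)) simp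
  show "Tk M k (v i j) = l2_star (Tk M k (v j i))"
    by (rule Tk_hermitian) (use psd \<open>i < n\<close> \<open>j < n\<close> in simp_all)
next
  fix m \<eta> assume \<eta>: "boxdot_cone e m \<eta>"
  have \<eta>_l2: "\<eta> j q \<in> l2" if "j < m" "q < m" for j q
    using conjunct1[OF \<eta>[unfolded boxdot_cone_def], rule_format, OF that] by (rule conjunct1)
  have \<eta>_psd: "psd_on {..<m} (\<lambda>j q. l2_inner \<xi> (\<eta> j q))" if "\<xi> \<in> herm_cone e" for \<xi>
    using conjunct2[OF \<eta>[unfolded boxdot_cone_def]] that by (rule bspec)
  define P' where "P' S = (\<lambda>(i, j) (p, q). \<Sum>f\<in>S. Tk M k (v i p) f * cnj (\<eta> j q f))" for S
  show "psd_on ({..<n} \<times> {..<m}) (\<lambda>(i, j) (p, q). l2_inner (Tk M k (v i p)) (\<eta> j q))"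
  proof (rule psd_on_limit[where F = "finite_subsets_at_top UNIV" and P' = P'])
    fix a b assume "a \<in> {..<n} \<times> {..<m}" "b \<in> {..<n} \<times> {..<m}"
    then obtain i j p q where ab: "a = (i, j)" "b = (p, q)" "i < n" "j < m" "p < n" "q < m"
      by auto
    have "((\<lambda>f. Tk M k (v i p) f * cnj (\<eta> j q f)) has_sum l2_inner (Tk M k (v i p)) (\<eta> j q)) UNIV"
      using cont ab by (intro l2_inner_has_sum Tk_l2(1) \<eta>_l2) auto
    then show "((\<lambda>S. P' S a b) \<longlongrightarrow> (\<lambda>(i, j) (p, q). l2_inner (Tk M k (v i p)) (\<eta> j q)) a b)
        (finite_subsets_at_top UNIV)"
      unfolding has_sum_def P'_def ab by simp
  next
    show "\<forall>\<^sub>F S in finite_subsets_at_top UNIV. psd_on ({..<n} \<times> {..<m}) (P' S)"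
      unfolding eventually_finite_subsets_at_top
    proof (intro exI[of _ "{e}"] conjI allI impI)
      fix S :: "'f set" assume "finite S \<and> {e} \<subseteq> S \<and> S \<subseteq> UNIV"
      then have S: "finite S" "e \<in> S" by auto
      show "psd_on ({..<n} \<times> {..<m}) (P' S)"
      proof (rule psd_on_integral[where G = "\<lambda>x (i, j) (p, q). v i p x * l2_inner (kernel_on S x) (\<eta> j q)"])
        fix a b assume "a \<in> {..<n} \<times> {..<m}" "b \<in> {..<n} \<times> {..<m}"
        then obtain i j p q where ab: "a = (i, j)" "b = (p, q)" "i < n" "p < n"
          by auto
        show "integrable M (\<lambda>x. (case a of (i, j) \<Rightarrow> \<lambda>(p, q). v i p x * l2_inner (kernel_on S x) (\<eta> j q)) b)"
          using Tk_partial_inner(1)[OF _ S(1)] cont ab by simp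
        show "P' S a b = (\<integral>x. (case a of (i, j) \<Rightarrow> \<lambda>(p, q). v i p x * l2_inner (kernel_on S x) (\<eta> j q)) b \<partial>M)"
          using Tk_partial_inner(2)[OF _ S(1)] cont ab by (simp add: P'_def)
      next
        show "AE x in M. psd_on ({..<n} \<times> {..<m})
            (\<lambda>(i, j) (p, q). v i p x * l2_inner (kernel_on S x) (\<eta> j q))"
          using AE_dominated
        proof eventually_elim
          case (elim x)
          show ?case
            using psd \<eta>_psd[OF kernel_on_herm_cone[OF S elim]] by (intro psd_on_kronecker) auto
        qed
      qed simp
    qed auto
  qed simp_all
qed

definition M' :: "'a measure" where
  "M' = density M (\<lambda>x. ennreal (k e x))"

definition k' :: "'f \<Rightarrow> 'a \<Rightarrow> real" where
  "k' = (\<lambda>f. if f = e then (\<lambda>_. 1) else (\<lambda>x. k f x / k e x))"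

lemma k'_measurable[measurable]: "k' f \<in> borel_measurable M"
  unfolding k'_def by auto

lemma integral_M':
  fixes g :: "'a \<Rightarrow> 'b::{banach, second_countable_topology}"
  assumes "g \<in> borel_measurable M"
  shows "(\<integral>x. g x \<partial>M') = (\<integral>x. k e x *\<^sub>R g x \<partial>M)"
  unfolding M'_def by (rule integral_density) (use assms ke_nonneg in auto)

lemma AE_k_unit_mult_k': "AE x in M. \<forall>f. k e x * k' f x = k f x"
  using AE_dominated
proof eventually_elim
  case (elim x)
  show ?case
  proof
    fix f
    show "k e x * k' f x = k f x"
      using dominated_abs_le[OF elim, of f] by (cases "k e x = 0") (auto simp: k'_def)
  qed
qed

lemma integral_M'_mult_k':
  fixes v :: "'a \<Rightarrow> 'b::{real_normed_field, banach, second_countable_topology}"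
  assumes [measurable]: "v \<in> borel_measurable M"
  shows "(\<integral>x. v x * of_real (k' f x) \<partial>M') = (\<integral>x. v x * of_real (k f x) \<partial>M)"
proof -
  have "(\<integral>x. v x * of_real (k' f x) \<partial>M') = (\<integral>x. k e x *\<^sub>R (v x * of_real (k' f x)) \<partial>M)"
    by (rule integral_M') measurable
  also have "\<dots> = (\<integral>x. v x * of_real (k f x) \<partial>M)"
  proof (rule integral_cong_AE)
    show "AE x in M. k e x *\<^sub>R (v x * of_real (k' f x)) = v x * of_real (k f x)"
      using AE_k_unit_mult_k'
    proof eventually_elim
      case (elim x)
      have "k e x *\<^sub>R (v x * of_real (k' f x)) = v x * of_real (k e x * k' f x)"
        by (simp add: scaleR_conv_of_real ac_simps)
      then show ?case using elim by simp
    qed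
  qed measurable
  finally show ?thesis .
qed

lemma prob_space_M': "prob_space M'"
proof (rule prob_spaceI)
  have "emeasure M' (space M') = (\<integral>\<^sup>+ x. ennreal (k e x) \<partial>M)"
    unfolding M'_def by (simp add: emeasure_density)
  also have "\<dots> = ennreal (\<integral>x. k e x \<partial>M)"
    by (rule nn_integral_eq_integral) (use k_integrable ke_nonneg in auto)
  finally show "emeasure M' (space M') = 1" using integral_k_unit by simp
qed

lemma Tk_eq_integral_M':
  assumes "continuous_on UNIV v"
  shows "Tk M k v f = (\<integral>x. v x * complex_of_real (k' f x) \<partial>M')"
  unfolding Tk_def using integral_M'_mult_k'[OF continuous_measurable[OF assms]] by simp

lemma H_support_on_X_M': "H_support_on_X M' e k'"
  unfolding H_support_on_X_def
proof (intro conjI allI impI)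
  fix f
  show "k' f \<in> borel_measurable M'"
    using k'_measurable measurable_cong_sets[of M' M] by (simp add: M'_def)
  show "AE x in M'. \<bar>k' f x\<bar> \<le> 1"
    unfolding M'_def
  proof (subst AE_density)
    show "AE x in M. 0 < ennreal (k e x) \<longrightarrow> \<bar>k' f x\<bar> \<le> 1"
      using AE_dominated
    proof eventually_elim
      case (elim x)
      show ?case
        using dominated_abs_le[OF elim, of f] by (auto simp: k'_def abs_divide ennreal_neg)
    qed
  qed measurable
  show "k' e = (\<lambda>_. 1)" by (simp add: k'_def)
next
  fix f :: 'f assume "f \<noteq> e"
  then show "(\<integral>x. k' f x \<partial>M') = 0"
    using integral_M'_mult_k'[of "\<lambda>_. 1 :: real" f] integral_k_other by simp
next
  fix v :: "'a \<Rightarrow> real" assume v: "continuous_on UNIV v \<and> (\<forall>x. 0 \<le> v x)"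
  define vc where "vc x = complex_of_real (v x)" for x
  have vc: "continuous_on UNIV vc" unfolding vc_def using v by (intro continuous_intros) auto
  have v_meas: "v \<in> borel_measurable M" using v by (intro continuous_measurable) simp
  have coeff: "(\<integral>x. v x * k' f x \<partial>M') = Re (Tk M k vc f)" "cmod (Tk M k vc f) = \<bar>\<integral>x. v x * k' f x \<partial>M'\<bar>" for f
  proof -
    have "Tk M k vc f = complex_of_real (\<integral>x. v x * k' f x \<partial>M')"
      unfolding Tk_def vc_def using integral_M'_mult_k'[OF v_meas, of f] by (simp flip: of_real_mult)
    then show "(\<integral>x. v x * k' f x \<partial>M') = Re (Tk M k vc f)" "cmod (Tk M k vc f) = \<bar>\<integral>x. v x * k' f x \<partial>M'\<bar>"
      by simp_all
  qed
  have total: "(\<integral>x. v x \<partial>M') = (\<integral>x. cmod (vc x) * k e x \<partial>M)"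
    using integral_M'[OF v_meas] v by (simp add: vc_def mult.commute)
  have total_nonneg: "(\<integral>x. v x \<partial>M') \<ge> 0"
    using v by (simp add: integral_nonneg)
  have bound: "(\<Sum>f\<in>H. (\<integral>x. v x * k' f x \<partial>M')\<^sup>2) \<le> (\<integral>x. v x \<partial>M')\<^sup>2"
    if "finite H" "H \<subseteq> UNIV - {e}" for H
  proof -
    have "L2_set (\<lambda>f. \<integral>x. v x * k' f x \<partial>M') H = L2_set (\<lambda>f. cmod (Tk M k vc f)) H"
      unfolding L2_set_def coeff(2) by simp
    also have "\<dots> \<le> (\<integral>x. v x \<partial>M')"
      unfolding total using that by (intro Tk_L2_set_le vc) auto
    finally show ?thesis
      unfolding L2_set_def using total_nonneg by (simp add: sqrt_le_D)
  qed
  have summable: "(\<lambda>f. (\<integral>x. v x * k' f x \<partial>M')\<^sup>2) summable_on (UNIV - {e})"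
    by (rule nonneg_bdd_above_summable_on) (use bound in \<open>auto simp: bdd_above_def\<close>)
  then show "(\<lambda>f. (\<integral>x. v x * k' f x \<partial>M')\<^sup>2) summable_on (UNIV - {e})" .
  show "infsum (\<lambda>f. (\<integral>x. v x * k' f x \<partial>M')\<^sup>2) (UNIV - {e}) \<le> (\<integral>x. v x \<partial>M')\<^sup>2"
    using infsum_le_finite_sums[OF summable bound] by simp
qed

definition support :: "'f set" where
  "support = {f. (\<integral>x. (k f x)\<^sup>2 \<partial>M) \<noteq> 0}"

lemma AE_zero_outside_support: "f \<notin> support \<Longrightarrow> AE x in M. k f x = 0"
  using integral_nonneg_eq_0_iff_AE[OF k_square_integrable] by (simp add: support_def)

lemma unit_in_support: "e \<in> support"
proof (rule ccontr)
  assume "e \<notin> support"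
  then have "(\<integral>x. k e x \<partial>M) = (\<integral>x. 0 \<partial>M)"
    using AE_zero_outside_support by (intro integral_cong_AE) auto
  then show False using integral_k_unit by simp
qed

lemma countable_support: "countable support"
proof -
  define C where "C = (\<integral>x. 2 * (k e x)\<^sup>2 \<partial>M)"
  have fin: "finite {f. (\<integral>x. (k f x)\<^sup>2 \<partial>M) > 1 / real (Suc n)}" for n
  proof (rule conjunct1[OF finite_if_finite_subsets_card_bdd[where C = "nat \<lceil>real (Suc n) * C\<rceil>"]])
    fix G assume G: "G \<subseteq> {f. (\<integral>x. (k f x)\<^sup>2 \<partial>M) > 1 / real (Suc n)}" "finite G"
    have "real (card G) / real (Suc n) = (\<Sum>f\<in>G. 1 / real (Suc n))" by simp
    also have "\<dots> \<le> (\<Sum>f\<in>G. \<integral>x. (k f x)\<^sup>2 \<partial>M)"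
      using G by (intro sum_mono) auto
    also have "\<dots> = (\<integral>x. (\<Sum>f\<in>G. (k f x)\<^sup>2) \<partial>M)"
      using k_square_integrable by (simp add: Bochner_Integration.integral_sum)
    also have "\<dots> \<le> C"
      unfolding C_def using k_square_integrable AE_dominated
      by (intro integral_mono_AE) (auto elim!: eventually_mono intro: dominated_sum_square_le G(2))
    finally have "real (card G) \<le> real (Suc n) * C" by (simp add: field_simps)
    then show "card G \<le> nat \<lceil>real (Suc n) * C\<rceil>" by linarith
  qed
  have "countable (\<Union>n. {f. (\<integral>x. (k f x)\<^sup>2 \<partial>M) > 1 / real (Suc n)})"
    by (rule countable_UN) (use fin in \<open>auto intro: countable_finite\<close>)
  moreover have "support \<subseteq> (\<Union>n. {f. (\<integral>x. (k f x)\<^sup>2 \<partial>M) > 1 / real (Suc n)})"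
  proof
    fix f assume "f \<in> support"
    moreover have "(\<integral>x. (k f x)\<^sup>2 \<partial>M) \<ge> 0" by simp
    ultimately have "(\<integral>x. (k f x)\<^sup>2 \<partial>M) > 0" by (simp add: support_def order_less_le)
    then obtain n where "inverse (real (Suc n)) < (\<integral>x. (k f x)\<^sup>2 \<partial>M)"
      using reals_Archimedean by blast
    then show "f \<in> (\<Union>n. {f. (\<integral>x. (k f x)\<^sup>2 \<partial>M) > 1 / real (Suc n)})"
      by (auto simp: field_simps)
  qed
  ultimately show ?thesis by (rule countable_subset[rotated])
qed

definition support_prefix :: "nat \<Rightarrow> 'f set" where
  "support_prefix N = insert e (from_nat_into support ` {..<N})"

lemma support_prefix_finite: "finite (support_prefix N)"
  unfolding support_prefix_def by simp

lemma unit_in_support_prefix: "e \<in> support_prefix N"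
  unfolding support_prefix_def by simp

lemma card_support_prefix: "card (support_prefix N) \<le> Suc N"
proof -
  have "card (from_nat_into support ` {..<N}) \<le> N"
    using card_image_le[of "{..<N}" "from_nat_into support"] by simp
  then show ?thesis
    unfolding support_prefix_def by (intro card_insert_le_m1) auto
qed

lemma support_prefix_mono: "N \<le> N' \<Longrightarrow> support_prefix N \<subseteq> support_prefix N'"
  unfolding support_prefix_def by auto

lemma support_prefix_subset: "support_prefix N \<subseteq> support"
  unfolding support_prefix_def using unit_in_support from_nat_into[of support] by auto

lemma finite_subset_support_prefix:
  assumes "finite H" "H \<subseteq> support"
  shows "\<exists>N. H \<subseteq> support_prefix N"
  using assms
proof (induction H rule: finite_induct)
  case (insert f H)
  then obtain N where N: "H \<subseteq> support_prefix N" by auto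
  obtain n where "from_nat_into support n = f"
    using insert.prems from_nat_into_surj[OF countable_support] by blast
  then have "f \<in> support_prefix (Suc n)" unfolding support_prefix_def by auto
  then have "insert f H \<subseteq> support_prefix (max N (Suc n))"
    using N support_prefix_mono[of N "max N (Suc n)"] support_prefix_mono[of "Suc n" "max N (Suc n)"] by auto
  then show ?case by blast
qed simp

definition simple_approx :: "nat \<Rightarrow> 'a \<Rightarrow> 'f \<Rightarrow> real" where
  "simple_approx N x = (\<lambda>f. if f \<in> support_prefix N then grid_round N (k f x) else 0)"

definition rounding_error :: "nat \<Rightarrow> 'a \<Rightarrow> real" where
  "rounding_error N x = L2_set (\<lambda>f. k f x - grid_round N (k f x)) (support_prefix N)"

definition head_sum :: "nat \<Rightarrow> 'a \<Rightarrow> real" where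
  "head_sum N x = (\<Sum>f\<in>support_prefix N - {e}. (k f x)\<^sup>2)"

definition tail_norm :: "nat \<Rightarrow> 'a \<Rightarrow> real" where
  "tail_norm N x = sqrt (lim (\<lambda>N'. head_sum N' x) - head_sum N x)"

definition approx_error :: "nat \<Rightarrow> real" where
  "approx_error N = (\<integral>x. rounding_error N x \<partial>M) + (\<integral>x. tail_norm N x \<partial>M)"

lemma simple_approx_measurable[measurable]: "(\<lambda>x. simple_approx N x f) \<in> borel_measurable M"
  unfolding simple_approx_def by measurable

lemma rounding_error_measurable[measurable]: "rounding_error N \<in> borel_measurable M"
  unfolding rounding_error_def L2_set_def by measurable

lemma head_sum_measurable[measurable]: "head_sum N \<in> borel_measurable M"
  unfolding head_sum_def by measurable

lemma tail_norm_measurable[measurable]: "tail_norm N \<in> borel_measurable M"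
proof -
  have [measurable]: "(\<lambda>x. lim (\<lambda>N'. head_sum N' x)) \<in> borel_measurable M"
    by (rule borel_measurable_lim_metric) simp
  show ?thesis unfolding tail_norm_def by measurable
qed

lemma head_sum_mono: "N \<le> N' \<Longrightarrow> head_sum N x \<le> head_sum N' x"
  unfolding head_sum_def using support_prefix_mono support_prefix_finite
  by (intro sum_mono2) auto

lemma head_sum_nonneg: "head_sum N x \<ge> 0"
  unfolding head_sum_def by (simp add: sum_nonneg)

lemma head_sum_tendsto:
  assumes "dominated x"
  shows "(\<lambda>N. head_sum N x) \<longlonglongrightarrow> lim (\<lambda>N. head_sum N x)"
    "head_sum N x \<le> lim (\<lambda>N. head_sum N x)" "lim (\<lambda>N. head_sum N x) \<le> (k e x)\<^sup>2"
proof -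
  have inc: "incseq (\<lambda>N. head_sum N x)" by (rule incseq_SucI) (simp add: head_sum_mono)
  have le: "head_sum N x \<le> (k e x)\<^sup>2" for N
    unfolding head_sum_def using support_prefix_finite by (intro dominatedD(2)[OF assms]) auto
  then have "convergent (\<lambda>N. head_sum N x)"
    using inc by (intro Bseq_monoseq_convergent BseqI'[of _ "(k e x)\<^sup>2"] incseq_imp_monoseq)
      (auto simp: head_sum_nonneg)
  then show lim: "(\<lambda>N. head_sum N x) \<longlonglongrightarrow> lim (\<lambda>N. head_sum N x)"
    by (rule convergent_LIMSEQ_iff[THEN iffD1])
  show "head_sum N x \<le> lim (\<lambda>N. head_sum N x)" by (rule incseq_le[OF inc lim])
  show "lim (\<lambda>N. head_sum N x) \<le> (k e x)\<^sup>2" by (rule LIMSEQ_le_const2[OF lim]) (simp add: le)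
qed

lemma tail_norm_bounds:
  assumes "dominated x"
  shows "tail_norm N x \<ge> 0" "tail_norm N x \<le> k e x"
  using head_sum_tendsto[OF assms] head_sum_nonneg[of N x] dominatedD(1)[OF assms]
    real_sqrt_le_mono[of "lim (\<lambda>N. head_sum N x) - head_sum N x" "(k e x)\<^sup>2"]
  unfolding tail_norm_def by auto

lemma abs_tail_norm_le:
  assumes "dominated x"
  shows "\<bar>tail_norm N x\<bar> \<le> k e x"
  using tail_norm_bounds[OF assms, of N] by simp

lemma tail_norm_tendsto:
  assumes "dominated x"
  shows "(\<lambda>N. tail_norm N x) \<longlonglongrightarrow> 0"
proof -
  have "(\<lambda>N. lim (\<lambda>N. head_sum N x) - head_sum N x)
      \<longlonglongrightarrow> lim (\<lambda>N. head_sum N x) - lim (\<lambda>N. head_sum N x)"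
    by (intro tendsto_diff tendsto_const head_sum_tendsto(1)[OF assms])
  from tendsto_real_sqrt[OF this] show ?thesis unfolding tail_norm_def by simp
qed

lemma sum_square_outside_prefix_le:
  assumes x: "dominated x" and H: "finite H" "H \<subseteq> support"
  shows "(\<Sum>f\<in>H - support_prefix N. (k f x)\<^sup>2) \<le> (tail_norm N x)\<^sup>2"
proof -
  obtain N1 where "H \<subseteq> support_prefix N1" using finite_subset_support_prefix[OF H] by blast
  then have H_sub: "H \<subseteq> support_prefix (max N N1)"
    using support_prefix_mono[of N1 "max N N1"] by auto
  have "(\<Sum>f\<in>H - support_prefix N. (k f x)\<^sup>2) \<le> (\<Sum>f\<in>support_prefix (max N N1) - support_prefix N. (k f x)\<^sup>2)"
    using H_sub support_prefix_finite by (intro sum_mono2) auto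
  also have "\<dots> = head_sum (max N N1) x - head_sum N x"
  proof -
    have "support_prefix (max N N1) - support_prefix N
        = (support_prefix (max N N1) - {e}) - (support_prefix N - {e})"
      using unit_in_support_prefix by auto
    then show ?thesis
      unfolding head_sum_def using support_prefix_finite support_prefix_mono[of N "max N N1"]
      by (simp add: sum_diff Diff_mono)
  qed
  also have "\<dots> \<le> (tail_norm N x)\<^sup>2"
    using head_sum_tendsto(2)[OF x, of "max N N1"] head_sum_tendsto(2)[OF x, of N]
    unfolding tail_norm_def by simp
  finally show ?thesis .
qed

lemma rounding_error_nonneg: "rounding_error N x \<ge> 0"
  unfolding rounding_error_def by simp

lemma rounding_error_le:
  assumes "dominated x"
  shows "rounding_error N x \<le> 2 * \<bar>k e x\<bar> + 1"
proof -
  have "(\<Sum>f\<in>support_prefix N. (k f x - grid_round N (k f x))\<^sup>2)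
      \<le> (\<Sum>f\<in>support_prefix N. (k f x)\<^sup>2 + (1 / real (Suc N))\<^sup>2)"
    by (intro sum_mono grid_round_error_square)
  also have "\<dots> = (\<Sum>f\<in>support_prefix N. (k f x)\<^sup>2) + card (support_prefix N) * (1 / real (Suc N))\<^sup>2"
    by (simp add: sum.distrib)
  also have "\<dots> \<le> 2 * (k e x)\<^sup>2 + real (Suc N) * (1 / real (Suc N))\<^sup>2"
    using dominated_sum_square_le[OF assms support_prefix_finite] card_support_prefix[of N]
    by (intro add_mono mult_right_mono) auto
  also have "real (Suc N) * (1 / real (Suc N))\<^sup>2 = 1 / real (Suc N)"
    by (simp add: power2_eq_square)
  also have "2 * (k e x)\<^sup>2 + 1 / real (Suc N) \<le> (2 * \<bar>k e x\<bar> + 1)\<^sup>2"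
  proof -
    have "(2 * \<bar>k e x\<bar> + 1)\<^sup>2 = 4 * (k e x)\<^sup>2 + 4 * \<bar>k e x\<bar> + 1"
      by (simp add: power2_eq_square algebra_simps)
    moreover have "1 / real (Suc N) \<le> 1" by simp
    ultimately show ?thesis by (simp add: add_mono)
  qed
  finally show ?thesis
    unfolding rounding_error_def L2_set_def by (intro real_le_lsqrt) auto
qed

lemma rounding_error_tendsto:
  assumes x: "dominated x"
  shows "(\<lambda>N. rounding_error N x) \<longlonglongrightarrow> 0"
proof (rule Lim_null_comparison)
  obtain N0 :: nat where N0: "k e x \<le> real N0" using real_arch_simple by blast
  show "eventually (\<lambda>N. norm (rounding_error N x) \<le> sqrt (inverse (real (Suc N)))) sequentially"
    unfolding eventually_sequentially
  proof (intro exI[of _ N0] allI impI)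
    fix N assume "N0 \<le> N"
    then have small: "\<bar>k f x\<bar> \<le> real (Suc N)" for f
      using dominated_abs_le[OF x, of f] N0 by linarith
    have "(k f x - grid_round N (k f x))\<^sup>2 \<le> (1 / real (Suc N))\<^sup>2" for f
      using grid_round_error[OF small] power2_le_iff_abs_le[of "1 / real (Suc N)"] by simp
    then have "(\<Sum>f\<in>support_prefix N. (k f x - grid_round N (k f x))\<^sup>2) \<le> (\<Sum>f\<in>support_prefix N. (1 / real (Suc N))\<^sup>2)"
      by (rule sum_mono)
    also have "\<dots> \<le> real (Suc N) * (1 / real (Suc N))\<^sup>2"
      using card_support_prefix[of N] by (simp add: mult_right_mono del: of_nat_Suc)
    also have "\<dots> = inverse (real (Suc N))"
      by (simp add: power2_eq_square divide_inverse)
    finally show "norm (rounding_error N x) \<le> sqrt (inverse (real (Suc N)))"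
      using rounding_error_nonneg[of N x] unfolding rounding_error_def L2_set_def by simp
  qed
  show "(\<lambda>N. sqrt (inverse (real (Suc N)))) \<longlonglongrightarrow> 0"
    using tendsto_real_sqrt[OF LIMSEQ_inverse_real_of_nat] by simp
qed

lemma integrable_rounding_error: "integrable M (rounding_error N)"
  by (rule Bochner_Integration.integrable_bound[of _ "\<lambda>x. 2 * \<bar>k e x\<bar> + 1"])
    (use k_integrable[of e] AE_dominated in \<open>auto elim!: eventually_mono intro: rounding_error_le simp: rounding_error_nonneg\<close>)

lemma integrable_tail_norm: "integrable M (tail_norm N)"
  by (rule Bochner_Integration.integrable_bound[OF k_integrable[of e]])
    (use AE_dominated in \<open>auto elim!: eventually_mono intro: order_trans[OF abs_tail_norm_le]\<close>)

lemma approx_error_tendsto: "approx_error \<longlonglongrightarrow> 0"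
proof -
  have "(\<lambda>N. \<integral>x. rounding_error N x \<partial>M) \<longlonglongrightarrow> (\<integral>x. 0 \<partial>M)"
    by (rule integral_dominated_convergence[where w = "\<lambda>x. 2 * \<bar>k e x\<bar> + 1"])
      (use k_integrable[of e] AE_dominated in \<open>auto elim!: eventually_mono
        intro: rounding_error_tendsto rounding_error_le simp: rounding_error_nonneg\<close>)
  moreover have "(\<lambda>N. \<integral>x. tail_norm N x \<partial>M) \<longlonglongrightarrow> (\<integral>x. 0 \<partial>M)"
    by (rule integral_dominated_convergence[where w = "k e"])
      (use k_integrable[of e] AE_dominated in \<open>auto elim!: eventually_mono
        intro: tail_norm_tendsto abs_tail_norm_le\<close>)
  ultimately show ?thesis
    unfolding approx_error_def using tendsto_add by fastforce
qed

lemma simple_function_simple_approx: "simple_function M (simple_approx N)"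
  unfolding simple_function_def
proof
  have "simple_approx N ` space M \<subseteq> {w. \<forall>f. (f \<in> support_prefix N \<longrightarrow> w f \<in> range (grid_round N))
      \<and> (f \<notin> support_prefix N \<longrightarrow> w f = 0)}"
    unfolding simple_approx_def by auto
  moreover have "finite {w. \<forall>f. (f \<in> support_prefix N \<longrightarrow> w f \<in> range (grid_round N))
      \<and> (f \<notin> support_prefix N \<longrightarrow> w f = 0)}"
    by (rule finite_set_of_finite_funs) (simp_all add: support_prefix_finite finite_range_grid_round)
  ultimately show "finite (simple_approx N ` space M)" by (rule finite_subset)
  show "\<forall>w\<in>simple_approx N ` space M. simple_approx N -` {w} \<inter> space M \<in> sets M"
  proof
    fix w assume "w \<in> simple_approx N ` space M"
    then have "\<forall>f. f \<notin> support_prefix N \<longrightarrow> w f = 0" by (auto simp: simple_approx_def)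
    then have "simple_approx N -` {w} \<inter> space M
        = {x \<in> space M. \<forall>f\<in>support_prefix N. grid_round N (k f x) = w f}"
      by (auto simp: simple_approx_def fun_eq_iff)
    also have "\<dots> \<in> sets M"
      using support_prefix_finite by measurable
    finally show "simple_approx N -` {w} \<inter> space M \<in> sets M" .
  qed
qed

lemma L2_set_k_minus_simple_approx:
  assumes x: "dominated x" and H: "finite H" "H \<subseteq> support"
  shows "L2_set (\<lambda>f. k f x - simple_approx N x f) H \<le> rounding_error N x + tail_norm N x"
proof -
  define C where "C f = (if f \<in> support_prefix N then k f x - grid_round N (k f x) else 0)" for f
  define B where "B f = (if f \<in> support_prefix N then 0 else k f x)" for f
  have "(\<Sum>f\<in>H. (C f)\<^sup>2) = (\<Sum>f\<in>H \<inter> support_prefix N. (k f x - grid_round N (k f x))\<^sup>2)"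
    by (rule sum.mono_neutral_cong_right) (use H in \<open>auto simp: C_def\<close>)
  also have "\<dots> \<le> (\<Sum>f\<in>support_prefix N. (k f x - grid_round N (k f x))\<^sup>2)"
    by (rule sum_mono2) (auto simp: support_prefix_finite)
  finally have C_le: "L2_set C H \<le> rounding_error N x"
    unfolding rounding_error_def L2_set_def by (rule real_sqrt_le_mono)
  have "(\<Sum>f\<in>H. (B f)\<^sup>2) = (\<Sum>f\<in>H - support_prefix N. (k f x)\<^sup>2)"
    by (rule sum.mono_neutral_cong_right) (use H in \<open>auto simp: B_def\<close>)
  also have "\<dots> \<le> (tail_norm N x)\<^sup>2" by (rule sum_square_outside_prefix_le[OF x H])
  finally have B_le: "L2_set B H \<le> tail_norm N x"
    unfolding L2_set_def using tail_norm_bounds(1)[OF x] by (simp add: real_le_lsqrt real_sqrt_le_iff)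
  have "L2_set (\<lambda>f. k f x - simple_approx N x f) H = L2_set (\<lambda>f. C f + B f) H"
    by (rule L2_set_cong) (auto simp: simple_approx_def C_def B_def)
  also have "\<dots> \<le> L2_set C H + L2_set B H" by (rule L2_set_triangle_ineq)
  finally show ?thesis using C_le B_le by linarith
qed

lemma AE_L2_set_k_minus_simple_approx:
  assumes H: "finite H"
  shows "AE x in M. L2_set (\<lambda>f. k f x - simple_approx N x f) H \<le> rounding_error N x + tail_norm N x"
proof -
  have "AE x in M. \<forall>f\<in>H - support. k f x = 0"
    using H AE_zero_outside_support by (intro AE_finite_allI) auto
  with AE_dominated show ?thesis
  proof eventually_elim
    case (elim x)
    have "L2_set (\<lambda>f. k f x - simple_approx N x f) H = L2_set (\<lambda>f. k f x - simple_approx N x f) (H \<inter> support)"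
      unfolding L2_set_def using H elim support_prefix_subset
      by (intro arg_cong[where f = sqrt] sum.mono_neutral_right) (auto simp: simple_approx_def)
    also have "\<dots> \<le> rounding_error N x + tail_norm N x"
      using H elim by (intro L2_set_k_minus_simple_approx) auto
    finally show ?case .
  qed
qed

lemma Tk_minus_simple_approx:
  fixes v :: "'a \<Rightarrow> complex"
  assumes v: "continuous_on UNIV v"
  shows "l2_norm (\<lambda>f. Tk M k v f - (\<integral>x. v x * simple_approx N x f \<partial>M)) \<le> sup_norm v * approx_error N"
proof (rule l2_if_L2_set_le(2))
  fix H :: "'f set" assume H: "finite H"
  define G where "G x = cmod (v x) * (rounding_error N x + tail_norm N x)" for x
  have B: "sup_norm v \<ge> 0" using sup_norm_bound[OF X_compact v] norm_ge_zero order_trans by blast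
  have error_nonneg: "AE x in M. rounding_error N x + tail_norm N x \<ge> 0"
    using AE_dominated by eventually_elim (simp add: rounding_error_def tail_norm_bounds)
  have error_int: "integrable M (\<lambda>x. rounding_error N x + tail_norm N x)"
    using integrable_rounding_error integrable_tail_norm by simp
  have s_le: "cmod (v x * complex_of_real (simple_approx N x f)) \<le> sup_norm v * (\<bar>k f x\<bar> + 1)" for x f
  proof -
    have "\<bar>simple_approx N x f\<bar> \<le> \<bar>k f x\<bar> + 1"
      by (simp add: simple_approx_def grid_round_abs_le)
    then show ?thesis
      unfolding norm_mult norm_of_real by (intro mult_mono sup_norm_bound[OF X_compact v]) (use B in auto)
  qed
  have int_s: "integrable M (\<lambda>x. v x * complex_of_real (simple_approx N x f))" for f
    by (rule Bochner_Integration.integrable_bound[of _ "\<lambda>x. sup_norm v * (\<bar>k f x\<bar> + 1)"])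
      (use k_integrable[of f] continuous_measurable[OF v] s_le in \<open>auto intro: order_trans[OF _ abs_ge_self]\<close>)
  have int_diff: "integrable M (\<lambda>x. v x * complex_of_real (k f x - simple_approx N x f))" for f
    using Bochner_Integration.integrable_diff[OF integrable_continuous_mult_k[OF v, of f] int_s[of f]]
    by (simp add: algebra_simps)
  have diff: "Tk M k v f - (\<integral>x. v x * simple_approx N x f \<partial>M)
      = (\<integral>x. v x * complex_of_real (k f x - simple_approx N x f) \<partial>M)" for f
    using Bochner_Integration.integral_diff[OF integrable_continuous_mult_k[OF v, of f] int_s[of f]]
    unfolding Tk_def by (simp add: algebra_simps)
  have G_int: "integrable M G"
    unfolding G_def
    by (rule Bochner_Integration.integrable_bound[of _ "\<lambda>x. sup_norm v * (rounding_error N x + tail_norm N x)"])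
      (use error_int continuous_measurable[OF v] error_nonneg B in
        \<open>auto elim!: eventually_mono intro!: mult_right_mono sup_norm_bound[OF X_compact v] simp: abs_mult\<close>)
  have "L2_set (\<lambda>f. cmod (Tk M k v f - (\<integral>x. v x * simple_approx N x f \<partial>M))) H
      = L2_set (\<lambda>f. cmod (\<integral>x. v x * complex_of_real (k f x - simple_approx N x f) \<partial>M)) H"
    by (simp only: diff)
  also have "\<dots> \<le> (\<integral>x. G x \<partial>M)"
  proof (rule L2_set_integral_le[OF H int_diff G_int])
    show "AE x in M. L2_set (\<lambda>f. cmod (v x * complex_of_real (k f x - simple_approx N x f))) H \<le> G x"
      using AE_L2_set_k_minus_simple_approx[OF H, of N]
      by eventually_elim (simp add: L2_set_cmod_mult_of_real G_def mult_left_mono del: of_real_diff)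
  qed
  also have "\<dots> \<le> (\<integral>x. sup_norm v * (rounding_error N x + tail_norm N x) \<partial>M)"
    using G_int error_int error_nonneg unfolding G_def
    by (intro integral_mono_AE) (auto elim!: eventually_mono intro!: mult_right_mono sup_norm_bound[OF X_compact v])
  also have "\<dots> = sup_norm v * approx_error N"
    unfolding approx_error_def using integrable_rounding_error integrable_tail_norm by simp
  finally show "L2_set (\<lambda>f. cmod (Tk M k v f - (\<integral>x. v x * simple_approx N x f \<partial>M))) H
      \<le> sup_norm v * approx_error N" .
qed

lemma l2_norm_simple_approx_diff_le:
  assumes x: "dominated x"
  shows "l2_norm (\<lambda>f. complex_of_real (simple_approx N' x f - simple_approx N x f))
    \<le> (rounding_error N' x + tail_norm N' x) + (rounding_error N x + tail_norm N x)"
proof -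
  define H where "H = support_prefix N \<union> support_prefix N'"
  have H: "finite H" "H \<subseteq> support"
    unfolding H_def using support_prefix_finite support_prefix_subset by auto
  have "l2_norm (\<lambda>f. complex_of_real (simple_approx N' x f - simple_approx N x f))
      = L2_set (\<lambda>f. cmod (complex_of_real (simple_approx N' x f - simple_approx N x f))) H"
    by (rule l2_finite_support(2)[OF H(1)]) (auto simp: H_def simple_approx_def)
  also have "\<dots> = L2_set (\<lambda>f. (k f x - simple_approx N x f) + (simple_approx N' x f - k f x)) H"
    unfolding L2_set_def norm_of_real by simp
  also have "\<dots> \<le> L2_set (\<lambda>f. k f x - simple_approx N x f) H + L2_set (\<lambda>f. simple_approx N' x f - k f x) H"
    by (rule L2_set_triangle_ineq)
  also have "L2_set (\<lambda>f. simple_approx N' x f - k f x) H = L2_set (\<lambda>f. k f x - simple_approx N' x f) H"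
    unfolding L2_set_def by (simp add: power2_commute)
  finally show ?thesis
    using L2_set_k_minus_simple_approx[OF x H, of N] L2_set_k_minus_simple_approx[OF x H, of N'] by linarith
qed

lemma nuclear_CX_Tk: "nuclear_CX (Tk M k)"
proof -
  have "\<exists>N. approx_error N \<le> (1 / 2) ^ j" for j
  proof -
    have "eventually (\<lambda>N. approx_error N < (1 / 2) ^ j) sequentially"
      by (rule order_tendstoD(2)[OF approx_error_tendsto]) simp
    then show ?thesis by (metis eventually_sequentially less_imp_le order_refl)
  qed
  then obtain N :: "nat \<Rightarrow> nat" where N: "\<And>j. approx_error (N j) \<le> (1 / 2) ^ j"
    by metis
  define \<sigma> where "\<sigma> j x f = (if j = 0 then 0 else complex_of_real (simple_approx (N (j - 1)) x f))" for j x f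
  have \<sigma>_Suc: "\<sigma> (Suc j) = (\<lambda>x f. complex_of_real (simple_approx (N j) x f))" for j
    by (simp add: \<sigma>_def fun_eq_iff)
  have \<sigma>_0: "\<sigma> 0 = (\<lambda>x f. 0)"
    by (simp add: \<sigma>_def fun_eq_iff)
  show ?thesis
  proof (rule nuclear_CX_of_simple_approximation[OF X_compact finite_measure_axioms sets_M, where \<sigma> = \<sigma>])
    show "simple_function M (\<sigma> j)" for j
    proof (cases j)
      case (Suc i)
      show ?thesis
        using simple_function_compose1[OF simple_function_simple_approx, of "\<lambda>w f. complex_of_real (w f)" "N i"]
        unfolding Suc \<sigma>_Suc .
    qed (simp add: \<sigma>_0)
    show "finite {f. \<sigma> j x f \<noteq> 0}" for j x
      by (rule finite_subset[OF _ support_prefix_finite[of "N (j - 1)"]]) (auto simp: \<sigma>_def simple_approx_def)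
    show "\<sigma> 0 x = (\<lambda>_. 0)" for x by (simp add: \<sigma>_0)
    show "Tk M k v \<in> l2" if "continuous_on UNIV v" for v using Tk_l2(1)[OF that] .
    show "summable (\<lambda>j. \<integral>x. l2_norm (\<lambda>f. \<sigma> (Suc j) x f - \<sigma> j x f) \<partial>M)"
    proof (rule summable_comparison_test'[where N = 1])
      show "summable (\<lambda>j. 4 * (1 / 2 :: real) ^ j)" by simp
      fix j :: nat assume "1 \<le> j"
      then obtain i where j: "j = Suc i" by (cases j) auto
      define D where "D x = l2_norm (\<lambda>f. complex_of_real (simple_approx (N (Suc i)) x f - simple_approx (N i) x f))" for x
      define E where "E n x = rounding_error n x + tail_norm n x" for n x
      have D_simple: "simple_function M D"
        unfolding D_def using simple_function_compose2[OF simple_function_simple_approx simple_function_simple_approx,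
          of "\<lambda>a b. l2_norm (\<lambda>f. complex_of_real (a f - b f))" "N (Suc i)" "N i"] by simp
      have D_int: "integrable M D"
        using D_simple by (rule integrable_simple_function) simp
      have D_nonneg: "(\<integral>x. D x \<partial>M) \<ge> 0"
        unfolding D_def by (intro integral_nonneg_AE AE_I2 l2_norm_nonneg)
      have E_int: "integrable M (E n)" for n
        unfolding E_def using integrable_rounding_error integrable_tail_norm by simp
      have "(\<integral>x. D x \<partial>M) \<le> (\<integral>x. E (N (Suc i)) x + E (N i) x \<partial>M)"
        using D_int E_int AE_dominated unfolding D_def E_def
        by (intro integral_mono_AE)
          (auto elim!: eventually_mono intro: l2_norm_simple_approx_diff_le simp del: of_real_diff)
      also have "\<dots> = approx_error (N (Suc i)) + approx_error (N i)"
        using E_int integrable_rounding_error integrable_tail_norm unfolding E_def approx_error_def by simp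
      also have "\<dots> \<le> (1 / 2) ^ Suc i + (1 / 2) ^ i" by (intro add_mono N)
      also have "\<dots> \<le> 4 * (1 / 2) ^ j" using j by simp
      finally show "norm (\<integral>x. l2_norm (\<lambda>f. \<sigma> (Suc j) x f - \<sigma> j x f) \<partial>M) \<le> 4 * (1 / 2) ^ j"
        using D_nonneg unfolding j \<sigma>_Suc D_def by (simp add: of_real_diff)
    qed
    show "(\<lambda>j. l2_norm (\<lambda>f. Tk M k v f - (\<integral>x. v x * \<sigma> j x f \<partial>M))) \<longlonglongrightarrow> 0"
      if v: "continuous_on UNIV v" for v
    proof (rule Lim_null_comparison)
      show "eventually (\<lambda>j. norm (l2_norm (\<lambda>f. Tk M k v f - (\<integral>x. v x * \<sigma> j x f \<partial>M)))
          \<le> sup_norm v * (2 * (1 / 2) ^ j)) sequentially"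
        unfolding eventually_sequentially
      proof (intro exI[of _ 1] allI impI)
        fix j :: nat assume "1 \<le> j"
        then obtain i where j: "j = Suc i" by (cases j) auto
        have B: "sup_norm v \<ge> 0" using sup_norm_bound[OF X_compact v] norm_ge_zero order_trans by blast
        have "l2_norm (\<lambda>f. Tk M k v f - (\<integral>x. v x * \<sigma> j x f \<partial>M)) \<le> sup_norm v * approx_error (N i)"
          unfolding j \<sigma>_Suc by (rule Tk_minus_simple_approx[OF v])
        also have "\<dots> \<le> sup_norm v * (2 * (1 / 2) ^ j)"
          using N[of i] B j by (intro mult_left_mono) auto
        finally show "norm (l2_norm (\<lambda>f. Tk M k v f - (\<integral>x. v x * \<sigma> j x f \<partial>M)))
            \<le> sup_norm v * (2 * (1 / 2) ^ j)"
          using l2_norm_nonneg[of "\<lambda>f. Tk M k v f - (\<integral>x. v x * \<sigma> j x f \<partial>M)"] by simp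
      qed
      show "(\<lambda>j. sup_norm v * (2 * (1 / 2 :: real) ^ j)) \<longlonglongrightarrow> 0"
        by (intro tendsto_mult_right_zero tendsto_mult_right_zero LIMSEQ_power_zero) simp
    qed
  qed
qed

end

theorem mainTheorem14:
  fixes M :: "'a::t2_space measure"
    and e :: 'f
    and k :: "'f \<Rightarrow> 'a \<Rightarrow> real"
  assumes X_compact: "compact (UNIV :: 'a set)"
    and radon: "radon_prob M"
    and supp: "unital_H_support_L2 M e k"
    and ke_nonneg: "AE x in M. k e x \<ge> 0"
    and sq_le: "AE x in M. (\<lambda>f. (k f x)\<^sup>2) summable_on (UNIV - {e}) \<and>
                           infsum (\<lambda>f. (k f x)\<^sup>2) (UNIV - {e}) \<le> (k e x)\<^sup>2"
  shows "(\<forall>n v. (\<forall>i<n. \<forall>j<n. continuous_on UNIV (v i j)) \<and> (\<forall>x. psd_on {..<n} (\<lambda>i j. v i j x))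
              \<longrightarrow> max_cone e n (\<lambda>i j. Tk M k (v i j)))
      \<and> Tk M k (\<lambda>_. 1) = basis_vec e
      \<and> (\<forall>v. continuous_on UNIV v \<and> (\<forall>x. Im (v x) = 0 \<and> Re (v x) \<ge> 0)
              \<longrightarrow> Tk M k v \<in> herm_cone e)
      \<and> nuclear_CX (Tk M k)
      \<and> (let \<mu>' = density M (\<lambda>x. ennreal (k e x));
             k' = (\<lambda>f. if f = e then (\<lambda>_. 1) else (\<lambda>x. k f x / k e x))
         in prob_space \<mu>' \<and> H_support_on_X \<mu>' e k' \<and>
            (\<forall>v f. continuous_on UNIV v \<longrightarrow>
               Tk M k v f = (\<integral>x. v x * complex_of_real (k' f x) \<partial>\<mu>')))"
proof -
  interpret pointwise_H_support M e k
    by unfold_locales (fact X_compact radon supp ke_nonneg sq_le)+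
  have "\<forall>n v. (\<forall>i<n. \<forall>j<n. continuous_on UNIV (v i j)) \<and> (\<forall>x. psd_on {..<n} (\<lambda>i j. v i j x))
      \<longrightarrow> max_cone e n (\<lambda>i j. Tk M k (v i j))"
    using Tk_max_cone by blast
  moreover have "\<forall>v. continuous_on UNIV v \<and> (\<forall>x. Im (v x) = 0 \<and> Re (v x) \<ge> 0) \<longrightarrow> Tk M k v \<in> herm_cone e"
    using Tk_herm_cone by blast
  moreover have "\<forall>v f. continuous_on UNIV v \<longrightarrow> Tk M k v f = (\<integral>x. v x * complex_of_real (k' f x) \<partial>M')"
    using Tk_eq_integral_M' by blast
  ultimately show ?thesis
    using Tk_one nuclear_CX_Tk prob_space_M' H_support_on_X_M' unfolding Let_def M'_def k'_def by simp
qed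

end
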